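(* Let $A=\{\mathbf{a}_1,\dots,\mathbf{a}_n\}\subseteq\mathbb{R}^d$ with hidden partition $\mathcal{V}=\{V_1,\dots,V_K\}$, and weights $w_{ij}=w_{ji}\ge0$, satisfying the three standing assumptions (distinct centroids, weight condition, $n>K(K+1)$) below; let $\gamma_{\min},\gamma_{\max},\gamma_{\max2},r,r_2$ be as below. Let $p>2$, $\delta:=2/n^p$, and for $\epsilon\in(0,1)$ let $\mathcal{D}_{\epsilon,\delta}$ be a DJL distribution over $\mathbb{R}^{m\times d}$ with $m=O(p\epsilon^{-2}\log n)$, where the implicit absolute constant $c$ is the same one used in $\epsilon_{\min}:=\sqrt{c\,p\log(n)/d}$; assume $m<d$ (equivalently $\epsilon_{\min}<1$ and $\epsilon\in(\epsilon_{\min},1)$). Define $\epsilon_{\sup}:=\frac{r^2-1}{r^2+1}$ and $\epsilon_{\sup2}:=\frac{r_2^2-1}{r_2^2+1}$. Let $\Pi$ be drawn from $\mathcal{D}_{\epsilon,\delta}$, and for $\gamma\ge0$ let $\hat\phi_\gamma(\mathbf{a}_i):=\hat{\mathbf{x}}_i^*(\gamma)$, where $\{\hat{\mathbf{x}}_i^*(\gamma)\}$ is the optimal solution of the randomly projected convex clustering model with $\Pi$ and $\gamma$. Then: 1. If $r>\sqrt{\frac{1+\epsilon_{\min}}{1-\epsilon_{\min}}}$, then $\epsilon_{\min}<\epsilon_{\sup}$, and for any $\epsilon\in[\epsilon_{\min},\epsilon_{\sup})$ and any $\hat\gamma\in[\sqrt{1+\epsilon}\,\gamma_{\min},\sqrt{1-\epsilon}\,\gamma_{\max})$,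 with probability greater than $1-n^{-(p-2)}$ the map $\hat\phi_{\hat\gamma}$ perfectly recovers $\mathcal{V}$. 2. If $r_2>\sqrt{\frac{1+\epsilon_{\min}}{1-\epsilon_{\min}}}$, then $\epsilon_{\min}<\epsilon_{\sup2}$, and for any $\epsilon\in[\epsilon_{\min},\epsilon_{\sup2})$ and any $\hat\gamma\in[\sqrt{1+\epsilon}\,\gamma_{\min},\sqrt{1-\epsilon}\,\gamma_{\max2})$, with probability greater than $1-n^{-(p-2)}$ the map $\hat\phi_{\hat\gamma}$ recovers a non-trivial coarsening of $\mathcal{V}$.
   Context: $\|\cdot\|$ is the Euclidean norm. Notation: $I_\alpha:=\{i:\mathbf{a}_i\in V_\alpha\}$, $n_\alpha:=|I_\alpha|$, $\mathbf{a}^{(\alpha)}:=\frac1{n_\alpha}\sum_{i\in I_\alpha}\mathbf{a}_i$ ($1\le\alpha\le K$), $\mathbf{a}^{(0)}:=\frac1n\sum_i\mathbf{a}_i$; $w^{(\alpha,\beta)}:=\sum_{i\in I_\alpha}\sum_{j\in I_\beta}w_{ij}$; $\bar w^{(\beta)}:=\frac1{n_\beta}\sum_{l\ne\beta}w^{(\beta,l)}$; $w_i^{(\beta)}:=\sum_{j\in I_\beta}w_{ij}$; $\mu_{ij}^{(\alpha)}:=\sum_{\beta\ne\alpha}|w_i^{(\beta)}-w_j^{(\beta)}|$ for $i,j\in I_\alpha$. Standing assumptions: (i) $\mathbf{a}^{(0)},\mathbf{a}^{(1)},\dots,\mathbf{a}^{(K)}$ are pairwise distinct; (ii) $w_{ij}>0$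 and $n_\alpha w_{ij}>\mu_{ij}^{(\alpha)}$ for all distinct $i,j\in I_\alpha$, $1\le\alpha\le K$; (iii) $n>K(K+1)$. Quantities: $\gamma_{\min}:=\max_{\alpha}\max_{i\ne j\in I_\alpha}\frac{\|\mathbf{a}_i-\mathbf{a}_j\|}{n_\alpha w_{ij}-\mu_{ij}^{(\alpha)}}$, $\gamma_{\max}:=\min_{1\le\alpha<\beta\le K}\frac{\|\mathbf{a}^{(\alpha)}-\mathbf{a}^{(\beta)}\|}{\bar w^{(\alpha)}+\bar w^{(\beta)}}$, $\gamma_{\max2}:=\max_{1\le\alpha\le K}\frac{\|\mathbf{a}^{(0)}-\mathbf{a}^{(\alpha)}\|}{\bar w^{(\alpha)}}$, $r:=\gamma_{\max}/\gamma_{\min}$, $r_2:=\gamma_{\max2}/\gamma_{\min}$. Randomly projected convex clustering model with $\Pi\in\mathbb{R}^{m\times d}$ and $\gamma\ge0$: $\min_{\hat{\mathbf{x}}_1,\dots,\hat{\mathbf{x}}_n\in\mathbb{R}^m}\frac12\sum_{i=1}^n\|\hat{\mathbf{x}}_i-\Pi\mathbf{a}_i\|^2+\gamma\sum_{i<j}w_{ij}\|\hat{\mathbf{x}}_i-\hat{\mathbf{x}}_j\|$ (strongly convex, unique solution). A map $\psi$ on $A$ perfectly recovers $\mathcal{V}$ if $\psi(\mathbf{a}_i)=\psi(\mathbf{a}_j)$ iff $\mathbf{a}_i,\mathbf{a}_j$ lie in the same $V_\alpha$. A partition $\{W_1,\dots,W_L\}$ of $A$ is a coarsening of $\mathcal{V}$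 if there is a partition $\{\alpha_1,\dots,\alpha_L\}$ of $\{1,\dots,K\}$ with $W_l=\bigcup_{i\in\alpha_l}V_i$; it is non-trivial if $L>1$; $\psi$ recovers it if it is the partition of $A$ into level sets of $\psi$. A DJL distribution $\mathcal{D}_{\epsilon,\delta}$ is a distribution over $\Pi\in\mathbb{R}^{m\times d}$ with $\mathbb{P}[\,|\|\Pi z\|^2-1|>\epsilon\,]<\delta$ for every unit $z\in\mathbb{R}^d$. *)

theory Defs
  imports "HOL-Probability.Probability"
begin

text \<open>Data: points a 0, ..., a (n-1) (0-based indices), hidden partition blocks
  V 1, ..., V K, weights w i j.\<close>

definition Iset :: "(nat \<Rightarrow> 'a) \<Rightarrow> nat \<Rightarrow> (nat \<Rightarrow> 'a set) \<Rightarrow> nat \<Rightarrow> nat set" where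
  "Iset a n V \<alpha> = {i \<in> {..<n}. a i \<in> V \<alpha>}"

definition nsz :: "(nat \<Rightarrow> 'a) \<Rightarrow> nat \<Rightarrow> (nat \<Rightarrow> 'a set) \<Rightarrow> nat \<Rightarrow> nat" where
  "nsz a n V \<alpha> = card (Iset a n V \<alpha>)"

definition cent :: "(nat \<Rightarrow> 'a::real_vector) \<Rightarrow> nat \<Rightarrow> (nat \<Rightarrow> 'a set) \<Rightarrow> nat \<Rightarrow> 'a" where
  "cent a n V \<alpha> = (if \<alpha> = 0 then (1 / real n) *\<^sub>R (\<Sum>i<n. a i)
     else (1 / real (nsz a n V \<alpha>)) *\<^sub>R (\<Sum>i\<in>Iset a n V \<alpha>. a i))"

definition wblock :: "(nat \<Rightarrow> 'a) \<Rightarrow> nat \<Rightarrow> (nat \<Rightarrow> 'a set) \<Rightarrow> (nat \<Rightarrow> nat \<Rightarrow> real) \<Rightarrow> nat \<Rightarrow> nat \<Rightarrow> real" where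
  "wblock a n V w \<alpha> \<beta> = (\<Sum>i\<in>Iset a n V \<alpha>. \<Sum>j\<in>Iset a n V \<beta>. w i j)"

definition wbar :: "(nat \<Rightarrow> 'a) \<Rightarrow> nat \<Rightarrow> (nat \<Rightarrow> 'a set) \<Rightarrow> nat \<Rightarrow> (nat \<Rightarrow> nat \<Rightarrow> real) \<Rightarrow> nat \<Rightarrow> real" where
  "wbar a n V K w \<beta> = (1 / real (nsz a n V \<beta>)) * (\<Sum>l\<in>{1..K} - {\<beta>}. wblock a n V w \<beta> l)"

definition wrow :: "(nat \<Rightarrow> 'a) \<Rightarrow> nat \<Rightarrow> (nat \<Rightarrow> 'a set) \<Rightarrow> (nat \<Rightarrow> nat \<Rightarrow> real) \<Rightarrow> nat \<Rightarrow> nat \<Rightarrow> real" where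
  "wrow a n V w i \<beta> = (\<Sum>j\<in>Iset a n V \<beta>. w i j)"

definition mu :: "(nat \<Rightarrow> 'a) \<Rightarrow> nat \<Rightarrow> (nat \<Rightarrow> 'a set) \<Rightarrow> nat \<Rightarrow> (nat \<Rightarrow> nat \<Rightarrow> real) \<Rightarrow> nat \<Rightarrow> nat \<Rightarrow> nat \<Rightarrow> real" where
  "mu a n V K w \<alpha> i j = (\<Sum>\<beta>\<in>{1..K} - {\<alpha>}. \<bar>wrow a n V w i \<beta> - wrow a n V w j \<beta>\<bar>)"

definition gamma_min :: "(nat \<Rightarrow> 'a::real_normed_vector) \<Rightarrow> nat \<Rightarrow> (nat \<Rightarrow> 'a set) \<Rightarrow> nat \<Rightarrow> (nat \<Rightarrow> nat \<Rightarrow> real) \<Rightarrow> real" where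
  "gamma_min a n V K w = Max {norm (a i - a j) / (real (nsz a n V \<alpha>) * w i j - mu a n V K w \<alpha> i j) | \<alpha> i j.
      \<alpha> \<in> {1..K} \<and> i \<in> Iset a n V \<alpha> \<and> j \<in> Iset a n V \<alpha> \<and> i \<noteq> j}"

definition gamma_max :: "(nat \<Rightarrow> 'a::real_normed_vector) \<Rightarrow> nat \<Rightarrow> (nat \<Rightarrow> 'a set) \<Rightarrow> nat \<Rightarrow> (nat \<Rightarrow> nat \<Rightarrow> real) \<Rightarrow> real" where
  "gamma_max a n V K w = Min {norm (cent a n V \<alpha> - cent a n V \<beta>) / (wbar a n V K w \<alpha> + wbar a n V K w \<beta>) | \<alpha> \<beta>.
      1 \<le> \<alpha> \<and> \<alpha> < \<beta> \<and> \<beta> \<le> K}"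

definition gamma_max2 :: "(nat \<Rightarrow> 'a::real_normed_vector) \<Rightarrow> nat \<Rightarrow> (nat \<Rightarrow> 'a set) \<Rightarrow> nat \<Rightarrow> (nat \<Rightarrow> nat \<Rightarrow> real) \<Rightarrow> real" where
  "gamma_max2 a n V K w = Max {norm (cent a n V 0 - cent a n V \<alpha>) / wbar a n V K w \<alpha> | \<alpha>. \<alpha> \<in> {1..K}}"

definition cc_obj :: "(nat \<Rightarrow> 'b::real_normed_vector) \<Rightarrow> nat \<Rightarrow> (nat \<Rightarrow> nat \<Rightarrow> real) \<Rightarrow> real \<Rightarrow> (nat \<Rightarrow> 'b) \<Rightarrow> real" where
  "cc_obj b n w \<gamma> x = (1/2) * (\<Sum>i<n. (norm (x i - b i))\<^sup>2)
      + \<gamma> * (\<Sum>i<n. \<Sum>j\<in>{i<..<n}. w i j * norm (x i - x j))"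

definition is_cc_opt :: "(nat \<Rightarrow> 'b::real_normed_vector) \<Rightarrow> nat \<Rightarrow> (nat \<Rightarrow> nat \<Rightarrow> real) \<Rightarrow> real \<Rightarrow> (nat \<Rightarrow> 'b) \<Rightarrow> bool" where
  "is_cc_opt b n w \<gamma> x \<longleftrightarrow> (\<forall>y. cc_obj b n w \<gamma> x \<le> cc_obj b n w \<gamma> y)"

definition proj_cc_solution :: "real^'d^'m \<Rightarrow> (nat \<Rightarrow> real^'d) \<Rightarrow> nat \<Rightarrow> (nat \<Rightarrow> nat \<Rightarrow> real) \<Rightarrow> real \<Rightarrow> (nat \<Rightarrow> real^'m) \<Rightarrow> bool" where
  "proj_cc_solution P a n w \<gamma> x \<longleftrightarrow> is_cc_opt (\<lambda>i. P *v a i) n w \<gamma> x"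

definition perfectly_recovers :: "(nat \<Rightarrow> 'a) \<Rightarrow> nat \<Rightarrow> (nat \<Rightarrow> 'a set) \<Rightarrow> nat \<Rightarrow> (nat \<Rightarrow> 'b) \<Rightarrow> bool" where
  "perfectly_recovers a n V K x \<longleftrightarrow>
     (\<forall>i<n. \<forall>j<n. x i = x j \<longleftrightarrow> (\<exists>\<alpha>\<in>{1..K}. a i \<in> V \<alpha> \<and> a j \<in> V \<alpha>))"

definition level_partition :: "(nat \<Rightarrow> 'a) \<Rightarrow> nat \<Rightarrow> (nat \<Rightarrow> 'b) \<Rightarrow> 'a set set" where
  "level_partition a n x = (\<lambda>i. a ` {j \<in> {..<n}. x j = x i}) ` {..<n}"

definition is_coarsening :: "'a set set \<Rightarrow> (nat \<Rightarrow> 'a set) \<Rightarrow> nat \<Rightarrow> bool" where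
  "is_coarsening W V K \<longleftrightarrow> (\<exists>P. partition_on {1..K} P \<and> W = (\<lambda>S. \<Union>\<alpha>\<in>S. V \<alpha>) ` P)"

definition recovers_nontrivial_coarsening :: "(nat \<Rightarrow> 'a) \<Rightarrow> nat \<Rightarrow> (nat \<Rightarrow> 'a set) \<Rightarrow> nat \<Rightarrow> (nat \<Rightarrow> 'b) \<Rightarrow> bool" where
  "recovers_nontrivial_coarsening a n V K x \<longleftrightarrow>
     is_coarsening (level_partition a n x) V K \<and> card (level_partition a n x) > 1"

definition DJL :: "(real^'d^'m) measure \<Rightarrow> real \<Rightarrow> real \<Rightarrow> bool" where
  "DJL M \<epsilon> \<delta> \<longleftrightarrow> prob_space M \<and> sets M = sets borel \<and>
     (\<forall>z::real^'d. norm z = 1 \<longrightarrow> measure M {P \<in> space M. \<bar>(norm (P *v z))\<^sup>2 - 1\<bar> > \<epsilon>} < \<delta>)"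

end

theory Submission
  imports Defs
begin

(* For convex clustering with data b,
   replacing a solution by its cluster-wise averages y lowers the objective by at least half the
   squared deviation as soon as ||b_i - b_j|| + gamma mu_ij <= gamma n_alpha w_ij inside every
   cluster; so the optimum is constant on clusters. Moving the common value of a cluster towards the
   cluster mean of b then shows that it lies within gamma wbar^(alpha) of that mean.
   For b_i = Pi a_i, the upper distortion bound sqrt(1 + eps) on the differences a_i - a_j turns
   gamma >= sqrt(1 + eps) gamma_min into the within-cluster condition, and the lower bound
   sqrt(1 - eps) on differences of centroids turns gamma < sqrt(1 - eps) gamma_max (resp. gamma_max2)
   into a separation of the projected centroids that forbids merging two clusters (resp. merging all
   points into the projected overall mean). A union bound over the n(n-1)/2 + K(K+1)/2 < n^2/2
   difference vectors gives the probability bound. *)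

section \<open>Convex clustering with labelled data\<close>

definition fusion_penalty :: "nat \<Rightarrow> (nat \<Rightarrow> nat \<Rightarrow> real) \<Rightarrow> (nat \<Rightarrow> 'b::real_normed_vector) \<Rightarrow> real" where
  "fusion_penalty n w u = (\<Sum>i<n. \<Sum>j<n. w i j * norm (u i - u j))"

lemma sum_square_eq_twice_upper_triangle:
  fixes g :: "nat \<Rightarrow> nat \<Rightarrow> 'a::comm_semiring_1"
  assumes "\<And>i j. i < n \<Longrightarrow> j < n \<Longrightarrow> g i j = g j i"
  shows "(\<Sum>i<n. \<Sum>j<n. g i j) = 2 * (\<Sum>i<n. \<Sum>j\<in>{i<..<n}. g i j) + (\<Sum>i<n. g i i)"
  using assms
proof (induction n)
  case (Suc n)
  have "{i<..<Suc n} = insert n {i<..<n}" if "i < n" for i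
    using that by auto
  moreover have "{n<..<Suc n} = {}"
    by auto
  ultimately have "(\<Sum>i<Suc n. \<Sum>j\<in>{i<..<Suc n}. g i j) = (\<Sum>i<n. g i n) + (\<Sum>i<n. \<Sum>j\<in>{i<..<n}. g i j)"
    by (simp add: sum.distrib)
  moreover have "(\<Sum>j<n. g n j) = (\<Sum>i<n. g i n)"
    using Suc.prems by simp
  ultimately show ?case
    using Suc by (simp add: sum.distrib mult_2 algebra_simps)
qed simp

lemma cc_obj_eq_fusion_penalty:
  assumes "\<forall>i<n. \<forall>j<n. w i j = w j i"
  shows "cc_obj b n w \<gamma> u = (1/2) * (\<Sum>i<n. (norm (u i - b i))\<^sup>2) + (\<gamma>/2) * fusion_penalty n w u"
proof -
  have "fusion_penalty n w u = 2 * (\<Sum>i<n. \<Sum>j\<in>{i<..<n}. w i j * norm (u i - u j))"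
    unfolding fusion_penalty_def
    by (subst sum_square_eq_twice_upper_triangle) (use assms in \<open>auto simp: norm_minus_commute\<close>)
  then show ?thesis
    unfolding cc_obj_def by simp
qed

lemma norm_plus_inner_sgn_le: "norm y + inner (sgn y) e \<le> norm (y + e :: 'a::real_inner)"
proof (cases "y = 0")
  case False
  have "inner (sgn y) (y + e) \<le> norm (y + e)"
    using norm_cauchy_schwarz[of "sgn y" "y + e"] False by (simp add: norm_sgn)
  moreover have "inner (sgn y) y = norm y"
    using False by (simp add: sgn_div_norm power2_norm_eq_inner[symmetric] power2_eq_square)
  ultimately show ?thesis
    by (simp add: inner_add_right)
qed simp

definition block :: "(nat \<Rightarrow> 'c) \<Rightarrow> nat \<Rightarrow> 'c \<Rightarrow> nat set" where
  "block cl n \<alpha> = {i. i < n \<and> cl i = \<alpha>}"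

definition block_mean :: "(nat \<Rightarrow> 'c) \<Rightarrow> nat \<Rightarrow> (nat \<Rightarrow> 'v::real_vector) \<Rightarrow> 'c \<Rightarrow> 'v" where
  "block_mean cl n x \<alpha> = (1 / real (card (block cl n \<alpha>))) *\<^sub>R (\<Sum>l\<in>block cl n \<alpha>. x l)"

lemma mem_block_iff [simp]: "i \<in> block cl n \<alpha> \<longleftrightarrow> i < n \<and> cl i = \<alpha>"
  by (simp add: block_def)

lemma finite_block [simp]: "finite (block cl n \<alpha>)"
  by (simp add: block_def)

lemma card_block_pos: "i < n \<Longrightarrow> 0 < card (block cl n (cl i))"
  using card_gt_0_iff by fastforce

lemma sum_block_minus_mean: "(\<Sum>l\<in>block cl n \<alpha>. x l - block_mean cl n x \<alpha>) = 0"
  by (cases "block cl n \<alpha> = {}") (simp_all add: block_mean_def sum_subtractf sum_constant_scaleR)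

lemma sum_block_swap:
  "(\<Sum>i<n. \<Sum>j\<in>block cl n (cl i). f i j) = (\<Sum>j<n. \<Sum>i\<in>block cl n (cl j). f i j)"
proof -
  have "block cl n (cl i) = {j. j \<in> {..<n} \<and> cl i = cl j}" for i
    by auto
  then show ?thesis
    using sum.swap_restrict[of "{..<n}" "{..<n}" f "\<lambda>i j. cl i = cl j"] by (simp add: eq_commute)
qed

lemma sum_pairs_inner_antisym:
  fixes Z :: "nat \<Rightarrow> nat \<Rightarrow> 'v::real_inner"
  assumes w: "\<And>i j. i < n \<Longrightarrow> j < n \<Longrightarrow> w i j = w j i" and Z: "\<And>i j. Z j i = - Z i j"
  shows "(\<Sum>i<n. \<Sum>j<n. w i j * inner (Z i j) (d i - d j))
    = 2 * (\<Sum>i<n. inner (d i) (\<Sum>j<n. w i j *\<^sub>R Z i j))"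
proof -
  have "(\<Sum>i<n. \<Sum>j<n. w i j * inner (Z i j) (d j)) = (\<Sum>j<n. \<Sum>i<n. w i j * inner (Z i j) (d j))"
    by (rule sum.swap)
  also have "\<dots> = - (\<Sum>j<n. \<Sum>i<n. w j i * inner (Z j i) (d j))"
  proof -
    have "w i j * inner (Z i j) (d j) = - (w j i * inner (Z j i) (d j))" if "i < n" "j < n" for i j
      using w[OF that] Z[of i j] by simp
    then show ?thesis
      unfolding sum_negf[symmetric] by (intro sum.cong refl) simp
  qed
  finally have "(\<Sum>i<n. \<Sum>j<n. w i j * inner (Z i j) (d j))
      = - (\<Sum>i<n. \<Sum>j<n. w i j * inner (Z i j) (d i))" .
  then show ?thesis
    by (simp add: inner_diff_right right_diff_distrib sum_subtractf inner_sum_right inner_commute)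
qed

lemma sum_block_pairs_centered:
  fixes d q :: "nat \<Rightarrow> 'v::real_inner"
  assumes centered: "\<And>\<alpha>. (\<Sum>l\<in>block cl n \<alpha>. d l) = 0"
  shows "(\<Sum>i<n. \<Sum>j\<in>block cl n (cl i). inner (d i - d j) (q i - q j) / real (card (block cl n (cl i))))
    = 2 * (\<Sum>i<n. inner (d i) (q i))"
proof -
  define N where "N i = real (card (block cl n (cl i)))" for i
  have diag: "(\<Sum>i<n. \<Sum>j\<in>block cl n (cl i). f i / N i) = (\<Sum>i<n. f i)" for f
    using card_block_pos by (intro sum.cong) (auto simp: N_def)
  have cross: "(\<Sum>i<n. \<Sum>j\<in>block cl n (cl i). inner (d j) (q i) / N i) = 0" for q
    by (simp add: inner_sum_left[symmetric] sum_divide_distrib[symmetric] centered)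
  have swap: "(\<Sum>i<n. \<Sum>j\<in>block cl n (cl i). f i j / N i)
        = (\<Sum>i<n. \<Sum>j\<in>block cl n (cl i). f j i / N i)" for f
  proof -
    have "(\<Sum>i<n. \<Sum>j\<in>block cl n (cl i). f i j / N i) = (\<Sum>j<n. \<Sum>i\<in>block cl n (cl j). f i j / N i)"
      by (rule sum_block_swap)
    also have "\<dots> = (\<Sum>j<n. \<Sum>i\<in>block cl n (cl j). f i j / N j)"
      by (intro sum.cong refl) (auto simp: N_def)
    finally show ?thesis .
  qed
  have expand: "inner (d i - d j) (q i - q j) / N i
      = inner (d i) (q i) / N i - inner (d i) (q j) / N i
        - inner (d j) (q i) / N i + inner (d j) (q j) / N i" for i j
    by (simp add: inner_diff_left inner_diff_right diff_divide_distrib add_divide_distrib)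
  have "(\<Sum>i<n. \<Sum>j\<in>block cl n (cl i). inner (d i - d j) (q i - q j) / N i)
      = (\<Sum>i<n. \<Sum>j\<in>block cl n (cl i). inner (d i) (q i) / N i)
        - (\<Sum>i<n. \<Sum>j\<in>block cl n (cl i). inner (d i) (q j) / N i)
        - (\<Sum>i<n. \<Sum>j\<in>block cl n (cl i). inner (d j) (q i) / N i)
        + (\<Sum>i<n. \<Sum>j\<in>block cl n (cl i). inner (d j) (q j) / N i)"
    by (simp only: expand sum.distrib sum_subtractf)
  also have "\<dots> = 2 * (\<Sum>i<n. inner (d i) (q i))"
    unfolding swap[of "\<lambda>i j. inner (d i) (q j)"] swap[of "\<lambda>i j. inner (d j) (q j)"] diag cross by simp
  finally show ?thesis
    by (simp add: N_def)
qed

lemma norm_diff_block_subgradient: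
  fixes Y :: "'c \<Rightarrow> 'v::real_normed_vector"
  assumes T: "finite T" "\<forall>l<n. cl l \<in> T" and ij: "i < n" "cl j = cl i"
  shows "norm ((\<Sum>l<n. w i l *\<^sub>R sgn (Y (cl i) - Y (cl l))) - (\<Sum>l<n. w j l *\<^sub>R sgn (Y (cl j) - Y (cl l))))
    \<le> (\<Sum>\<beta>\<in>T - {cl i}. \<bar>(\<Sum>l\<in>block cl n \<beta>. w i l) - (\<Sum>l\<in>block cl n \<beta>. w j l)\<bar>)"
proof -
  define c where "c \<beta> = (\<Sum>l\<in>block cl n \<beta>. w i l) - (\<Sum>l\<in>block cl n \<beta>. w j l)" for \<beta>
  have "(\<Sum>l<n. w i l *\<^sub>R sgn (Y (cl i) - Y (cl l))) - (\<Sum>l<n. w j l *\<^sub>R sgn (Y (cl j) - Y (cl l)))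
      = (\<Sum>\<beta>\<in>T. \<Sum>l\<in>{l\<in>{..<n}. cl l = \<beta>}. (w i l - w j l) *\<^sub>R sgn (Y (cl i) - Y (cl l)))"
    using T by (subst sum.group) (auto simp: ij(2) sum_subtractf scaleR_diff_left)
  also have "\<dots> = (\<Sum>\<beta>\<in>T. c \<beta> *\<^sub>R sgn (Y (cl i) - Y \<beta>))"
    unfolding c_def by (intro sum.cong refl)
      (auto simp: scaleR_sum_left[symmetric] sum_subtractf scaleR_diff_left block_def)
  finally have eq: "(\<Sum>l<n. w i l *\<^sub>R sgn (Y (cl i) - Y (cl l)))
      - (\<Sum>l<n. w j l *\<^sub>R sgn (Y (cl j) - Y (cl l))) = (\<Sum>\<beta>\<in>T. c \<beta> *\<^sub>R sgn (Y (cl i) - Y \<beta>))" .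
  have "norm (\<Sum>\<beta>\<in>T. c \<beta> *\<^sub>R sgn (Y (cl i) - Y \<beta>))
      \<le> (\<Sum>\<beta>\<in>T. norm (c \<beta> *\<^sub>R sgn (Y (cl i) - Y \<beta>)))"
    by (rule norm_sum)
  also have "\<dots> = (\<Sum>\<beta>\<in>T - {cl i}. norm (c \<beta> *\<^sub>R sgn (Y (cl i) - Y \<beta>)))"
    using T ij by (subst sum.remove[of _ "cl i"]) auto
  also have "\<dots> \<le> (\<Sum>\<beta>\<in>T - {cl i}. \<bar>c \<beta>\<bar>)"
    by (intro sum_mono) (simp add: norm_sgn)
  finally show ?thesis
    by (simp add: eq c_def)
qed

lemma fusion_penalty_ge_block_means:
  fixes x :: "nat \<Rightarrow> 'v::real_inner" and cl :: "nat \<Rightarrow> 'c" and n :: nat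
  defines "y \<equiv> \<lambda>i. block_mean cl n x (cl i)"
  assumes w: "\<forall>i<n. \<forall>j<n. w i j = w j i \<and> 0 \<le> w i j"
  shows "fusion_penalty n w y
      + 2 * (\<Sum>i<n. inner (x i - y i) (\<Sum>j<n. w i j *\<^sub>R sgn (y i - y j)))
      + (\<Sum>i<n. \<Sum>j\<in>block cl n (cl i). w i j * norm ((x i - y i) - (x j - y j)))
    \<le> fusion_penalty n w x"
proof -
  define d where "d i = x i - y i" for i
  define Z where "Z i j = sgn (y i - y j)" for i j
  have pointwise: "norm (y i - y j) + inner (Z i j) (d i - d j)
        + (if j \<in> block cl n (cl i) then norm (d i - d j) else 0)
      \<le> norm (x i - x j)" for i j
  proof (cases "j \<in> block cl n (cl i)")
    case True
    then show ?thesis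
      by (simp add: Z_def d_def y_def)
  next
    case False
    have "x i - x j = (y i - y j) + (d i - d j)"
      by (simp add: d_def)
    then show ?thesis
      using False norm_plus_inner_sgn_le[of "y i - y j" "d i - d j"]
      by (simp add: Z_def del: mem_block_iff)
  qed
  have "(\<Sum>j<n. w i j * (if j \<in> block cl n (cl i) then norm (d i - d j) else 0))
      = (\<Sum>j\<in>block cl n (cl i). w i j * norm (d i - d j))" for i
    by (simp add: if_distrib sum.If_cases Int_def block_def conj_commute)
  then have "fusion_penalty n w y + (\<Sum>i<n. \<Sum>j<n. w i j * inner (Z i j) (d i - d j))
      + (\<Sum>i<n. \<Sum>j\<in>block cl n (cl i). w i j * norm (d i - d j))
    = (\<Sum>i<n. \<Sum>j<n. w i j * (norm (y i - y j) + inner (Z i j) (d i - d j)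
        + (if j \<in> block cl n (cl i) then norm (d i - d j) else 0)))"
    by (simp add: fusion_penalty_def distrib_left sum.distrib)
  also have "\<dots> \<le> fusion_penalty n w x"
    unfolding fusion_penalty_def using w by (intro sum_mono mult_left_mono pointwise) auto
  moreover have "(\<Sum>i<n. \<Sum>j<n. w i j * inner (Z i j) (d i - d j))
        = 2 * (\<Sum>i<n. inner (d i) (\<Sum>j<n. w i j *\<^sub>R Z i j))"
    using w by (intro sum_pairs_inner_antisym) (auto simp: Z_def sgn_minus[symmetric])
  ultimately show ?thesis
    by (simp add: d_def Z_def)
qed

text \<open>The vector q i is the i-th component of a subgradient of the objective at the block means y.
  The fusion hypothesis bounds its variation inside a block, so that the within-block penalty of any
  deviation e pays for the first-order change.\<close>

lemma block_certificate_inner_ge: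
  fixes b x e :: "nat \<Rightarrow> 'v::real_inner" and cl :: "nat \<Rightarrow> 'c" and n :: nat
    and w :: "nat \<Rightarrow> nat \<Rightarrow> real" and \<gamma> :: real
  defines "y \<equiv> \<lambda>i. block_mean cl n x (cl i)"
  defines "q \<equiv> \<lambda>i. y i - b i + \<gamma> *\<^sub>R (\<Sum>l<n. w i l *\<^sub>R sgn (y i - y l))"
  assumes T: "finite T" "\<forall>i<n. cl i \<in> T" and \<gamma>: "0 \<le> \<gamma>"
    and fusion: "\<And>i j. i < n \<Longrightarrow> j < n \<Longrightarrow> cl j = cl i \<Longrightarrow> i \<noteq> j \<Longrightarrow>
        norm (b i - b j) + \<gamma> * (\<Sum>\<beta>\<in>T - {cl i}. \<bar>(\<Sum>l\<in>block cl n \<beta>. w i l) - (\<Sum>l\<in>block cl n \<beta>. w j l)\<bar>)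
          \<le> \<gamma> * (real (card (block cl n (cl i))) * w i j)"
    and ij: "i < n" "j \<in> block cl n (cl i)"
  shows "- (\<gamma> * (w i j * norm (e i - e j)))
    \<le> inner (e i - e j) (q i - q j) / real (card (block cl n (cl i)))"
proof (cases "i = j")
  case False
  define N where "N = real (card (block cl n (cl i)))"
  have j: "j < n" "cl j = cl i"
    using ij by auto
  then have "q i - q j = (b j - b i)
      + \<gamma> *\<^sub>R ((\<Sum>l<n. w i l *\<^sub>R sgn (y i - y l)) - (\<Sum>l<n. w j l *\<^sub>R sgn (y j - y l)))"
    by (simp add: q_def y_def algebra_simps)
  then have "norm (q i - q j) \<le> norm (b i - b j)
      + \<gamma> * norm ((\<Sum>l<n. w i l *\<^sub>R sgn (y i - y l)) - (\<Sum>l<n. w j l *\<^sub>R sgn (y j - y l)))"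
    using \<gamma> by (metis norm_scaleR norm_triangle_ineq abs_of_nonneg norm_minus_commute)
  also have "\<dots> \<le> norm (b i - b j)
      + \<gamma> * (\<Sum>\<beta>\<in>T - {cl i}. \<bar>(\<Sum>l\<in>block cl n \<beta>. w i l) - (\<Sum>l\<in>block cl n \<beta>. w j l)\<bar>)"
    using norm_diff_block_subgradient[OF T ij(1) j(2), of w "block_mean cl n x"] \<gamma>
    by (intro add_left_mono mult_left_mono) (simp_all add: y_def)
  also have "\<dots> \<le> \<gamma> * (N * w i j)"
    unfolding N_def by (rule fusion[OF ij(1) j False])
  finally have "norm (e i - e j) * norm (q i - q j) \<le> norm (e i - e j) * (\<gamma> * (N * w i j))"
    by (simp add: mult_left_mono)
  moreover have "- (norm (e i - e j) * norm (q i - q j)) \<le> inner (e i - e j) (q i - q j)"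
    using Cauchy_Schwarz_ineq2[of "e i - e j" "q i - q j"] by (simp add: abs_le_iff)
  moreover have "- (\<gamma> * (w i j * norm (e i - e j))) * N = - (norm (e i - e j) * (\<gamma> * (N * w i j)))"
    by (simp add: mult_ac)
  ultimately have "- (\<gamma> * (w i j * norm (e i - e j))) * N \<le> inner (e i - e j) (q i - q j)"
    by linarith
  moreover have "0 < N"
    using card_block_pos[OF ij(1)] by (simp add: N_def)
  ultimately show ?thesis
    by (simp add: N_def pos_le_divide_eq)
qed simp

lemma cc_obj_block_means_le:
  fixes b x :: "nat \<Rightarrow> 'v::real_inner" and cl :: "nat \<Rightarrow> 'c" and n :: nat
  defines "y \<equiv> \<lambda>i. block_mean cl n x (cl i)"
  assumes T: "finite T" "\<forall>i<n. cl i \<in> T"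
    and w: "\<forall>i<n. \<forall>j<n. w i j = w j i \<and> 0 \<le> w i j" and \<gamma>: "0 \<le> \<gamma>"
    and fusion: "\<And>i j. i < n \<Longrightarrow> j < n \<Longrightarrow> cl j = cl i \<Longrightarrow> i \<noteq> j \<Longrightarrow>
        norm (b i - b j) + \<gamma> * (\<Sum>\<beta>\<in>T - {cl i}. \<bar>(\<Sum>l\<in>block cl n \<beta>. w i l) - (\<Sum>l\<in>block cl n \<beta>. w j l)\<bar>)
          \<le> \<gamma> * (real (card (block cl n (cl i))) * w i j)"
  shows "cc_obj b n w \<gamma> y + (1/2) * (\<Sum>i<n. (norm (x i - y i))\<^sup>2) \<le> cc_obj b n w \<gamma> x"
proof -
  define d where "d i = x i - y i" for i
  define s where "s i = (\<Sum>j<n. w i j *\<^sub>R sgn (y i - y j))" for i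
  define q where "q i = y i - b i + \<gamma> *\<^sub>R s i" for i
  define N where "N i = real (card (block cl n (cl i)))" for i
  have sq: "(norm (x i - b i))\<^sup>2 = (norm (y i - b i))\<^sup>2
      + (norm (d i))\<^sup>2 + 2 * inner (d i) (y i - b i)" for i
  proof -
    have "x i - b i = d i + (y i - b i)"
      by (simp add: d_def)
    then show ?thesis
      using dot_norm[of "d i" "y i - b i"] by (simp add: algebra_simps)
  qed
  have pen: "fusion_penalty n w y + 2 * (\<Sum>i<n. inner (d i) (s i))
      + (\<Sum>i<n. \<Sum>j\<in>block cl n (cl i). w i j * norm (d i - d j)) \<le> fusion_penalty n w x"
    unfolding d_def s_def y_def by (rule fusion_penalty_ge_block_means[OF w])
  have centered: "(\<Sum>l\<in>block cl n \<alpha>. d l) = 0" for \<alpha>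
    using sum_block_minus_mean[where cl = cl and n = n and x = x and \<alpha> = \<alpha>] by (simp add: d_def y_def)
  have pair: "- (\<gamma> * (w i j * norm (d i - d j))) \<le> inner (d i - d j) (q i - q j) / N i"
    if "i < n" "j \<in> block cl n (cl i)" for i j
    unfolding q_def s_def N_def y_def by (rule block_certificate_inner_ge[OF T \<gamma> fusion that])
  have "- (\<gamma> * (\<Sum>i<n. \<Sum>j\<in>block cl n (cl i). w i j * norm (d i - d j)))
      \<le> (\<Sum>i<n. \<Sum>j\<in>block cl n (cl i). inner (d i - d j) (q i - q j) / N i)"
    unfolding sum_distrib_left sum_negf[symmetric] using pair by (intro sum_mono) auto
  also have "\<dots> = 2 * (\<Sum>i<n. inner (d i) (y i - b i)) + 2 * \<gamma> * (\<Sum>i<n. inner (d i) (s i))"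
    unfolding N_def sum_block_pairs_centered[OF centered]
    by (simp add: q_def inner_add_right sum.distrib sum_distrib_left mult.assoc)
  finally have inner_bound: "- (\<gamma> * (\<Sum>i<n. \<Sum>j\<in>block cl n (cl i). w i j * norm (d i - d j)))
      \<le> 2 * (\<Sum>i<n. inner (d i) (y i - b i)) + 2 * \<gamma> * (\<Sum>i<n. inner (d i) (s i))" .
  have "\<gamma> * fusion_penalty n w y + 2 * \<gamma> * (\<Sum>i<n. inner (d i) (s i))
      + \<gamma> * (\<Sum>i<n. \<Sum>j\<in>block cl n (cl i). w i j * norm (d i - d j)) \<le> \<gamma> * fusion_penalty n w x"
    using mult_left_mono[OF pen \<gamma>] by (simp add: distrib_left mult.assoc)
  moreover have "(\<Sum>i<n. (norm (x i - b i))\<^sup>2)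
      = (\<Sum>i<n. (norm (y i - b i))\<^sup>2) + (\<Sum>i<n. (norm (d i))\<^sup>2) + 2 * (\<Sum>i<n. inner (d i) (y i - b i))"
    by (simp add: sq sum.distrib sum_distrib_left)
  moreover have wsym: "\<forall>i<n. \<forall>j<n. w i j = w j i"
    using w by blast
  ultimately show ?thesis
    using inner_bound unfolding cc_obj_eq_fusion_penalty[OF wsym] d_def[symmetric] by linarith
qed

lemma cc_opt_constant_on_blocks:
  fixes b x :: "nat \<Rightarrow> 'v::real_inner" and cl :: "nat \<Rightarrow> 'c"
  assumes T: "finite T" "\<forall>i<n. cl i \<in> T"
    and w: "\<forall>i<n. \<forall>j<n. w i j = w j i \<and> 0 \<le> w i j" and \<gamma>: "0 \<le> \<gamma>"
    and fusion: "\<And>i j. i < n \<Longrightarrow> j < n \<Longrightarrow> cl j = cl i \<Longrightarrow> i \<noteq> j \<Longrightarrow>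
        norm (b i - b j) + \<gamma> * (\<Sum>\<beta>\<in>T - {cl i}. \<bar>(\<Sum>l\<in>block cl n \<beta>. w i l) - (\<Sum>l\<in>block cl n \<beta>. w j l)\<bar>)
          \<le> \<gamma> * (real (card (block cl n (cl i))) * w i j)"
    and opt: "is_cc_opt b n w \<gamma> x"
    and ij: "i < n" "j < n" "cl i = cl j"
  shows "x i = x j"
proof -
  define y where "y k = block_mean cl n x (cl k)" for k
  have "cc_obj b n w \<gamma> y + (1/2) * (\<Sum>k<n. (norm (x k - y k))\<^sup>2) \<le> cc_obj b n w \<gamma> x"
    unfolding y_def by (rule cc_obj_block_means_le[OF T w \<gamma> fusion])
  moreover have "cc_obj b n w \<gamma> x \<le> cc_obj b n w \<gamma> y"
    using opt by (simp add: is_cc_opt_def)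
  ultimately have "(\<Sum>k<n. (norm (x k - y k))\<^sup>2) = 0"
    by (simp add: sum_nonneg order_antisym)
  then have "x k = y k" if "k < n" for k
    using that by (simp add: sum_nonneg_eq_0_iff)
  then show ?thesis
    using ij by (simp add: y_def)
qed

lemma sum_sq_dist_shift_towards_mean:
  fixes b x :: "nat \<Rightarrow> 'v::real_inner" and X :: 'v and A :: "nat set"
  defines "v \<equiv> (1 / real (card A)) *\<^sub>R (\<Sum>l\<in>A. b l) - X"
  assumes A: "A \<subseteq> {..<n}" and const: "\<And>k. k \<in> A \<Longrightarrow> x k = X"
  shows "(\<Sum>k<n. (norm ((if k \<in> A then x k + t *\<^sub>R v else x k) - b k))\<^sup>2)
    = (\<Sum>k<n. (norm (x k - b k))\<^sup>2) + real (card A) * (t\<^sup>2 - 2 * t) * (norm v)\<^sup>2"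
proof -
  have finA: "finite A"
    using A finite_subset by blast
  have sum_A: "(\<Sum>k\<in>A. X - b k) = - (real (card A) *\<^sub>R v)"
    using finA by (cases "A = {}")
      (simp_all add: v_def sum_subtractf scaleR_diff_right sum_constant_scaleR)
  have pointwise: "(norm (X + t *\<^sub>R v - b k))\<^sup>2 - (norm (X - b k))\<^sup>2
      = t\<^sup>2 * (norm v)\<^sup>2 + 2 * t * inner (X - b k) v" for k
    using dot_norm[of "X - b k" "t *\<^sub>R v"] by (simp add: algebra_simps power_mult_distrib)
  have "(\<Sum>k\<in>A. (norm (X + t *\<^sub>R v - b k))\<^sup>2 - (norm (X - b k))\<^sup>2)
      = real (card A) * t\<^sup>2 * (norm v)\<^sup>2 + 2 * t * inner (\<Sum>k\<in>A. X - b k) v"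
    by (simp add: pointwise sum.distrib sum_distrib_left inner_sum_left)
  also have "\<dots> = real (card A) * (t\<^sup>2 - 2 * t) * (norm v)\<^sup>2"
    by (simp add: sum_A power2_norm_eq_inner algebra_simps)
  finally have "(\<Sum>k\<in>A. (norm (X + t *\<^sub>R v - b k))\<^sup>2 - (norm (X - b k))\<^sup>2)
      = real (card A) * (t\<^sup>2 - 2 * t) * (norm v)\<^sup>2" .
  moreover have "(\<Sum>k<n. (norm ((if k \<in> A then x k + t *\<^sub>R v else x k) - b k))\<^sup>2 - (norm (x k - b k))\<^sup>2)
      = (\<Sum>k<n. if k \<in> A then (norm (X + t *\<^sub>R v - b k))\<^sup>2 - (norm (X - b k))\<^sup>2 else 0)"
    using const by (intro sum.cong) auto
  moreover have "\<dots> = (\<Sum>k\<in>A. (norm (X + t *\<^sub>R v - b k))\<^sup>2 - (norm (X - b k))\<^sup>2)"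
    using A by (simp add: sum.inter_restrict[symmetric] Int_absorb1)
  ultimately show ?thesis
    by (simp add: sum_subtractf)
qed

lemma sum_cut_weights:
  fixes n :: nat
  assumes "A \<subseteq> {..<n}"
  shows "(\<Sum>k<n. \<Sum>l<n. if k \<in> A \<and> l \<notin> A then f k l else 0) = (\<Sum>k\<in>A. \<Sum>l\<in>{..<n} - A. f k l)"
proof -
  have "(\<Sum>l<n. if k \<in> A \<and> l \<notin> A then f k l else 0) = (if k \<in> A then \<Sum>l\<in>{..<n} - A. f k l else 0)" for k
    using sum.inter_restrict[of "{..<n}" "f k" "- A"] by (simp add: Diff_eq)
  then show ?thesis
    using assms by (simp add: sum.inter_restrict[symmetric] Int_absorb1)
qed

lemma fusion_penalty_shift_le:
  fixes x :: "nat \<Rightarrow> 'v::real_normed_vector"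
  assumes w: "\<forall>i<n. \<forall>j<n. w i j = w j i \<and> 0 \<le> w i j" and A: "A \<subseteq> {..<n}" and t: "0 \<le> t"
  shows "fusion_penalty n w (\<lambda>k. if k \<in> A then x k + t *\<^sub>R v else x k)
    \<le> fusion_penalty n w x + 2 * t * norm v * (\<Sum>k\<in>A. \<Sum>l\<in>{..<n} - A. w k l)"
proof -
  define u where "u k = (if k \<in> A then x k + t *\<^sub>R v else x k)" for k
  define cut where "cut k l = (if k \<in> A \<and> l \<notin> A then 1 else 0)
      + (if l \<in> A \<and> k \<notin> A then 1 else (0::real))" for k l
  have pointwise: "norm (u k - u l) \<le> norm (x k - x l) + t * norm v * cut k l" for k l
    using t norm_triangle_ineq[of "x k - x l" "t *\<^sub>R v"] norm_triangle_ineq[of "x k - x l" "- (t *\<^sub>R v)"]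
    by (auto simp: u_def cut_def algebra_simps)
  have "fusion_penalty n w u \<le> (\<Sum>k<n. \<Sum>l<n. w k l * (norm (x k - x l) + t * norm v * cut k l))"
    unfolding fusion_penalty_def using w by (intro sum_mono mult_left_mono pointwise) auto
  also have "\<dots> = fusion_penalty n w x + t * norm v * (\<Sum>k<n. \<Sum>l<n. w k l * cut k l)"
    by (simp add: fusion_penalty_def algebra_simps sum.distrib sum_distrib_left)
  also have "(\<Sum>k<n. \<Sum>l<n. w k l * cut k l) = 2 * (\<Sum>k\<in>A. \<Sum>l\<in>{..<n} - A. w k l)"
  proof -
    have "(\<Sum>k<n. \<Sum>l<n. if l \<in> A \<and> k \<notin> A then w k l else 0)
        = (\<Sum>l<n. \<Sum>k<n. if l \<in> A \<and> k \<notin> A then w l k else 0)"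
      using w by (subst sum.swap) (intro sum.cong refl; auto)
    moreover have "w k l * cut k l = (if k \<in> A \<and> l \<notin> A then w k l else 0)
        + (if l \<in> A \<and> k \<notin> A then w k l else 0)" for k l
      by (simp add: cut_def)
    ultimately show ?thesis
      using sum_cut_weights[OF A, of w] by (simp add: sum.distrib)
  qed
  finally show ?thesis
    by (simp add: u_def)
qed

lemma quadratic_perturbation_bound:
  fixes N D G :: real
  assumes "0 < N" "0 \<le> D" "0 \<le> G"
    and perturb: "\<And>t. 0 < t \<Longrightarrow> 0 \<le> N * (t\<^sup>2 - 2 * t) * D\<^sup>2 + 2 * t * D * G"
  shows "N * D \<le> G"
proof (rule ccontr)
  assume "\<not> N * D \<le> G"
  then have "0 < D" "G < N * D"
    using assms by (auto simp: not_le intro: le_neq_trans)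
  define t where "t = (N * D - G) / (N * D)"
  have "0 < t"
    using \<open>G < N * D\<close> \<open>0 < D\<close> \<open>0 < N\<close> by (simp add: t_def)
  moreover have "N * (t\<^sup>2 - 2 * t) * D\<^sup>2 + 2 * t * D * G = t * D * (G - N * D)"
    using \<open>0 < D\<close> \<open>0 < N\<close> by (simp add: t_def field_simps power2_eq_square)
  moreover have "t * D * (G - N * D) < 0"
    using \<open>0 < t\<close> \<open>0 < D\<close> \<open>G < N * D\<close> by (simp add: mult_pos_neg)
  ultimately show False
    using perturb by fastforce
qed

text \<open>Moving the common value of x on A by t towards the mean of b on A changes the fit term by
  card A (t^2 - 2t) |v|^2 and the penalty by at most 2 t |v| times the weight leaving A;
  optimality for all small t > 0 gives the bound.\<close>

lemma cc_opt_constant_set_dist_mean_le: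
  fixes b x :: "nat \<Rightarrow> 'v::real_inner"
  assumes w: "\<forall>i<n. \<forall>j<n. w i j = w j i \<and> 0 \<le> w i j" and \<gamma>: "0 \<le> \<gamma>"
    and opt: "is_cc_opt b n w \<gamma> x"
    and A: "A \<subseteq> {..<n}" "i \<in> A" and const: "\<And>k. k \<in> A \<Longrightarrow> x k = x i"
  shows "real (card A) * norm (x i - (1 / real (card A)) *\<^sub>R (\<Sum>l\<in>A. b l))
    \<le> \<gamma> * (\<Sum>k\<in>A. \<Sum>l\<in>{..<n} - A. w k l)"
proof -
  define v where "v = (1 / real (card A)) *\<^sub>R (\<Sum>l\<in>A. b l) - x i"
  define S where "S = (\<Sum>k\<in>A. \<Sum>l\<in>{..<n} - A. w k l)"
  have "0 < card A"
    using A finite_subset card_gt_0_iff by fastforce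
  moreover have "0 \<le> S"
    using w A unfolding S_def by (intro sum_nonneg) auto
  moreover have wsym: "\<forall>i<n. \<forall>j<n. w i j = w j i"
    using w by blast
  have "0 \<le> real (card A) * (t\<^sup>2 - 2 * t) * (norm v)\<^sup>2 + 2 * t * norm v * (\<gamma> * S)" if "0 < t" for t
  proof -
    define u where "u k = (if k \<in> A then x k + t *\<^sub>R v else x k)" for k
    have "cc_obj b n w \<gamma> x \<le> cc_obj b n w \<gamma> u"
      using opt by (simp add: is_cc_opt_def)
    moreover have "(\<Sum>k<n. (norm (u k - b k))\<^sup>2)
        = (\<Sum>k<n. (norm (x k - b k))\<^sup>2) + real (card A) * (t\<^sup>2 - 2 * t) * (norm v)\<^sup>2"
      unfolding u_def v_def using A(1) const by (rule sum_sq_dist_shift_towards_mean)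
    moreover have "\<gamma> * fusion_penalty n w u \<le> \<gamma> * fusion_penalty n w x + \<gamma> * (2 * t * norm v * S)"
      using mult_left_mono[OF fusion_penalty_shift_le[OF w A(1), of t x v] \<gamma>] that
      by (simp add: u_def[abs_def] S_def distrib_left)
    ultimately show ?thesis
      unfolding cc_obj_eq_fusion_penalty[OF wsym] by (simp add: algebra_simps)
  qed
  ultimately have "real (card A) * norm v \<le> \<gamma> * S"
    using \<gamma> by (intro quadratic_perturbation_bound) auto
  then show ?thesis
    by (simp add: v_def S_def norm_minus_commute)
qed

section \<open>The hidden partition and the projected model\<close>

locale cluster_partition =
  fixes a :: "nat \<Rightarrow> 'a" and n :: nat and V :: "nat \<Rightarrow> 'a set" and K :: nat
  assumes partition: "partition_on (a ` {..<n}) (V ` {1..K})"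
    and inj_V: "inj_on V {1..K}"
begin

definition label :: "nat \<Rightarrow> nat" where
  "label i = (THE \<alpha>. \<alpha> \<in> {1..K} \<and> a i \<in> V \<alpha>)"

lemma unique_cluster: "i < n \<Longrightarrow> \<exists>!\<alpha>. \<alpha> \<in> {1..K} \<and> a i \<in> V \<alpha>"
proof -
  assume "i < n"
  then have "a i \<in> \<Union>(V ` {1..K})"
    using partition_onD1[OF partition] by blast
  then obtain \<alpha> where "\<alpha> \<in> {1..K}" "a i \<in> V \<alpha>"
    by blast
  moreover have "\<beta> = \<alpha>" if "\<beta> \<in> {1..K}" "a i \<in> V \<beta>" for \<beta>
  proof (rule ccontr)
    assume "\<beta> \<noteq> \<alpha>"
    then have "V \<beta> \<noteq> V \<alpha>"
      using inj_on_contraD[OF inj_V] that(1) \<open>\<alpha> \<in> {1..K}\<close> by blast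
    then have "V \<beta> \<inter> V \<alpha> = {}"
      using disjointD[OF partition_onD2[OF partition]] that(1) \<open>\<alpha> \<in> {1..K}\<close> by blast
    then show False
      using that(2) \<open>a i \<in> V \<alpha>\<close> by blast
  qed
  ultimately show ?thesis
    by blast
qed

lemma label: "i < n \<Longrightarrow> label i \<in> {1..K} \<and> a i \<in> V (label i)"
  unfolding label_def by (rule theI') (rule unique_cluster)

lemma label_eqI: "i < n \<Longrightarrow> \<alpha> \<in> {1..K} \<Longrightarrow> a i \<in> V \<alpha> \<Longrightarrow> label i = \<alpha>"
  unfolding label_def by (rule the1_equality[OF unique_cluster]) auto

lemma label_surj: "\<alpha> \<in> {1..K} \<Longrightarrow> \<exists>i<n. label i = \<alpha>"
proof -
  assume \<alpha>: "\<alpha> \<in> {1..K}"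
  then obtain v where "v \<in> V \<alpha>"
    using partition_onD3[OF partition] by (metis equals0I imageI)
  moreover have "V \<alpha> \<subseteq> a ` {..<n}"
    using partition_onD1[OF partition] \<alpha> by blast
  ultimately obtain i where "i < n" "a i \<in> V \<alpha>"
    by auto
  then show ?thesis
    using label_eqI \<alpha> by blast
qed

lemma Iset_eq_block: "\<alpha> \<in> {1..K} \<Longrightarrow> Iset a n V \<alpha> = block label n \<alpha>"
  unfolding Iset_def block_def using label label_eqI by blast

lemma same_cluster_iff:
  "i < n \<Longrightarrow> j < n \<Longrightarrow> (\<exists>\<alpha>\<in>{1..K}. a i \<in> V \<alpha> \<and> a j \<in> V \<alpha>) \<longleftrightarrow> label i = label j"
  using label label_eqI by metis

lemma nsz_pos: "\<alpha> \<in> {1..K} \<Longrightarrow> 0 < nsz a n V \<alpha>"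
  using label_surj[of \<alpha>] by (auto simp: nsz_def Iset_eq_block card_gt_0_iff)

lemma sum_outside_cluster:
  assumes "\<alpha> \<in> {1..K}"
  shows "(\<Sum>l\<in>{..<n} - Iset a n V \<alpha>. f l) = (\<Sum>\<beta>\<in>{1..K} - {\<alpha>}. \<Sum>l\<in>Iset a n V \<beta>. f l)"
proof -
  have "(\<Sum>l\<in>{..<n} - Iset a n V \<alpha>. f l)
        = (\<Sum>\<beta>\<in>{1..K} - {\<alpha>}. \<Sum>l\<in>{l \<in> {..<n} - Iset a n V \<alpha>. label l = \<beta>}. f l)"
    using assms label by (intro sum.group[symmetric]) (auto simp: Iset_eq_block)
  also have "\<dots> = (\<Sum>\<beta>\<in>{1..K} - {\<alpha>}. \<Sum>l\<in>Iset a n V \<beta>. f l)"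
    using assms by (intro sum.cong refl) (auto simp: Iset_eq_block)
  finally show ?thesis .
qed

lemma nsz_mult_wbar:
  assumes "\<alpha> \<in> {1..K}"
  shows "real (nsz a n V \<alpha>) * wbar a n V K w \<alpha> = (\<Sum>k\<in>Iset a n V \<alpha>. \<Sum>l\<in>{..<n} - Iset a n V \<alpha>. w k l)"
  using nsz_pos[OF assms]
  by (simp add: wbar_def wblock_def sum_outside_cluster[OF assms]) (rule sum.swap)

lemma mu_eq_block_sums:
  "\<alpha> \<in> {1..K} \<Longrightarrow> mu a n V K w \<alpha> i j
    = (\<Sum>\<beta>\<in>{1..K} - {\<alpha>}. \<bar>(\<Sum>l\<in>block label n \<beta>. w i l) - (\<Sum>l\<in>block label n \<beta>. w j l)\<bar>)"
  unfolding mu_def wrow_def by (intro sum.cong refl) (simp add: Iset_eq_block)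

lemma level_partition_is_coarsening:
  assumes const: "\<And>i j. i < n \<Longrightarrow> j < n \<Longrightarrow> label i = label j \<Longrightarrow> x i = x j"
  shows "is_coarsening (level_partition a n x) V K"
proof -
  define blk where "blk k = label ` {l. l < n \<and> x l = x k}" for k
  have blk_eq: "blk k = blk k'" if common: "\<alpha> \<in> blk k" "\<alpha> \<in> blk k'" for \<alpha> k k'
  proof -
    obtain l l' where "l < n" "x l = x k" "l' < n" "x l' = x k'" "label l = label l'"
      using common unfolding blk_def by force
    then have "x k = x k'"
      using const by metis
    then show ?thesis
      by (simp add: blk_def)
  qed
  have "partition_on {1..K} (blk ` {..<n})"
  proof (rule partition_onI)
    show "\<Union>(blk ` {..<n}) = {1..K}"
      using label label_surj unfolding blk_def by fastforce
    show "disjnt p q" if "p \<in> blk ` {..<n}" "q \<in> blk ` {..<n}" "p \<noteq> q" for p q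
      using that blk_eq by (auto simp: disjnt_def)
    show "{} \<notin> blk ` {..<n}"
      unfolding blk_def by blast
  qed
  moreover have "a ` {l \<in> {..<n}. x l = x k} = (\<Union>\<alpha>\<in>blk k. V \<alpha>)" if "k < n" for k
  proof
    show "a ` {l \<in> {..<n}. x l = x k} \<subseteq> (\<Union>\<alpha>\<in>blk k. V \<alpha>)"
      using label unfolding blk_def by blast
    show "(\<Union>\<alpha>\<in>blk k. V \<alpha>) \<subseteq> a ` {l \<in> {..<n}. x l = x k}"
    proof
      fix v assume "v \<in> (\<Union>\<alpha>\<in>blk k. V \<alpha>)"
      then obtain l where l: "l < n" "x l = x k" "v \<in> V (label l)"
        unfolding blk_def by blast
      then obtain m where "m < n" "v = a m"
        using partition_onD1[OF partition] label by blast
      with l have "label m = label l" "x m = x k"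
        using label label_eqI const by metis+
      with \<open>m < n\<close> \<open>v = a m\<close> show "v \<in> a ` {l \<in> {..<n}. x l = x k}"
        by blast
    qed
  qed
  then have "level_partition a n x = (\<lambda>S. \<Union>\<alpha>\<in>S. V \<alpha>) ` blk ` {..<n}"
    unfolding level_partition_def by (auto simp: image_image)
  ultimately show ?thesis
    unfolding is_coarsening_def by blast
qed

lemma card_level_partition_gt_1:
  assumes const: "\<And>i j. i < n \<Longrightarrow> j < n \<Longrightarrow> label i = label j \<Longrightarrow> x i = x j"
    and split: "i < n" "j < n" "x i \<noteq> x j"
  shows "card (level_partition a n x) > 1"
proof -
  define L where "L k = a ` {l \<in> {..<n}. x l = x k}" for k
  have "a i \<notin> L j"
  proof
    assume "a i \<in> L j"
    then obtain l where "l < n" "x l = x j" "a i = a l"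
      unfolding L_def by blast
    then have "label i = label l"
      by (simp add: label_def)
    then show False
      using const \<open>l < n\<close> \<open>x l = x j\<close> split by metis
  qed
  then have "L i \<noteq> L j"
    using split(1) unfolding L_def by blast
  moreover have "{L i, L j} \<subseteq> level_partition a n x"
    using split unfolding level_partition_def L_def by blast
  moreover have "finite (level_partition a n x)"
    by (simp add: level_partition_def)
  ultimately have "card {L i, L j} \<le> card (level_partition a n x)"
    by (intro card_mono)
  then show ?thesis
    using \<open>L i \<noteq> L j\<close> by simp
qed

lemma one_le_K: "0 < n \<Longrightarrow> 1 \<le> K"
  using label[of 0] by simp

end

lemma matrix_vector_mult_cent:
  fixes a :: "nat \<Rightarrow> real^'d" and P :: "real^'d^'m"
  shows "P *v cent a n V \<alpha> = (if \<alpha> = 0 then (1 / real n) *\<^sub>R (\<Sum>i<n. P *v a i)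
     else (1 / real (nsz a n V \<alpha>)) *\<^sub>R (\<Sum>i\<in>Iset a n V \<alpha>. P *v a i))"
  by (simp add: cent_def matrix_vector_mult_scaleR linear_sum[OF matrix_vector_mul_linear] o_def)

definition cluster_fusion_condition ::
    "(nat \<Rightarrow> 'b::real_normed_vector) \<Rightarrow> (nat \<Rightarrow> 'a) \<Rightarrow> nat \<Rightarrow> (nat \<Rightarrow> 'a set) \<Rightarrow> nat
      \<Rightarrow> (nat \<Rightarrow> nat \<Rightarrow> real) \<Rightarrow> real \<Rightarrow> bool" where
  "cluster_fusion_condition b a n V K w \<gamma> \<longleftrightarrow>
     (\<forall>\<alpha>\<in>{1..K}. \<forall>i\<in>Iset a n V \<alpha>. \<forall>j\<in>Iset a n V \<alpha>. i \<noteq> j \<longrightarrow>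
        norm (b i - b j) \<le> \<gamma> * (real (nsz a n V \<alpha>) * w i j - mu a n V K w \<alpha> i j))"

lemma proj_cc_constant_on_clusters:
  fixes a :: "nat \<Rightarrow> real^'d" and P :: "real^'d^'m"
  assumes cp: "cluster_partition a n V K"
    and w: "\<forall>i<n. \<forall>j<n. w i j = w j i \<and> 0 \<le> w i j" and \<gamma>: "0 \<le> \<gamma>"
    and fusion: "cluster_fusion_condition (\<lambda>i. P *v a i) a n V K w \<gamma>"
    and sol: "proj_cc_solution P a n w \<gamma> x"
    and ij: "i < n" "j < n" "\<exists>\<alpha>\<in>{1..K}. a i \<in> V \<alpha> \<and> a j \<in> V \<alpha>"
  shows "x i = x j"
proof -
  interpret cluster_partition a n V K
    by (fact cp)
  show ?thesis
  proof (rule cc_opt_constant_on_blocks)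
    show "is_cc_opt (\<lambda>i. P *v a i) n w \<gamma> x"
      using sol by (simp add: proj_cc_solution_def)
    show "norm (P *v a k - P *v a l) + \<gamma> * (\<Sum>\<beta>\<in>{1..K} - {label k}.
          \<bar>(\<Sum>m\<in>block label n \<beta>. w k m) - (\<Sum>m\<in>block label n \<beta>. w l m)\<bar>)
        \<le> \<gamma> * (real (card (block label n (label k))) * w k l)"
      if "k < n" "l < n" "label l = label k" "k \<noteq> l" for k l
      using fusion label[OF \<open>k < n\<close>] that
      by (auto simp: cluster_fusion_condition_def Iset_eq_block nsz_def mu_eq_block_sums algebra_simps)
  qed (use w \<gamma> label same_cluster_iff ij in auto)
qed

lemma proj_cc_near_projected_centroid:
  fixes a :: "nat \<Rightarrow> real^'d" and P :: "real^'d^'m"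
  assumes cp: "cluster_partition a n V K"
    and w: "\<forall>i<n. \<forall>j<n. w i j = w j i \<and> 0 \<le> w i j" and \<gamma>: "0 \<le> \<gamma>"
    and fusion: "cluster_fusion_condition (\<lambda>i. P *v a i) a n V K w \<gamma>"
    and sol: "proj_cc_solution P a n w \<gamma> x"
    and \<alpha>: "\<alpha> \<in> {1..K}" and i: "i \<in> Iset a n V \<alpha>"
  shows "norm (x i - P *v cent a n V \<alpha>) \<le> \<gamma> * wbar a n V K w \<alpha>"
proof -
  interpret cluster_partition a n V K
    by (fact cp)
  have const: "x j = x i" if "j \<in> Iset a n V \<alpha>" for j
    using that i \<alpha> unfolding Iset_def by (intro proj_cc_constant_on_clusters[OF cp w \<gamma> fusion sol]) auto
  have opt: "is_cc_opt (\<lambda>i. P *v a i) n w \<gamma> x"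
    using sol by (simp add: proj_cc_solution_def)
  have sub: "Iset a n V \<alpha> \<subseteq> {..<n}"
    by (auto simp: Iset_def)
  have "real (nsz a n V \<alpha>) * norm (x i - P *v cent a n V \<alpha>)
      \<le> \<gamma> * (\<Sum>k\<in>Iset a n V \<alpha>. \<Sum>l\<in>{..<n} - Iset a n V \<alpha>. w k l)"
    using cc_opt_constant_set_dist_mean_le[OF w \<gamma> opt sub i const] \<alpha>
    by (simp add: matrix_vector_mult_cent nsz_def)
  also have "\<dots> = real (nsz a n V \<alpha>) * (\<gamma> * wbar a n V K w \<alpha>)"
    by (simp add: nsz_mult_wbar[OF \<alpha>])
  finally show ?thesis
    using nsz_pos[OF \<alpha>] by simp
qed

lemma proj_cc_constant_eq_projected_mean:
  fixes a :: "nat \<Rightarrow> real^'d" and P :: "real^'d^'m"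
  assumes w: "\<forall>i<n. \<forall>j<n. w i j = w j i \<and> 0 \<le> w i j" and \<gamma>: "0 \<le> \<gamma>"
    and sol: "proj_cc_solution P a n w \<gamma> x"
    and i: "i < n" and const: "\<And>j. j < n \<Longrightarrow> x j = x i"
  shows "x i = P *v cent a n V 0"
proof -
  have opt: "is_cc_opt (\<lambda>i. P *v a i) n w \<gamma> x"
    using sol by (simp add: proj_cc_solution_def)
  have "i \<in> {..<n}"
    using i by simp
  then have "real n * norm (x i - (1 / real n) *\<^sub>R (\<Sum>l<n. P *v a l)) \<le> 0"
    using cc_opt_constant_set_dist_mean_le[OF w \<gamma> opt order_refl _ const] by simp
  then show ?thesis
    using i by (simp add: matrix_vector_mult_cent mult_le_0_iff)
qed

lemma proj_cc_perfectly_recovers: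
  fixes a :: "nat \<Rightarrow> real^'d" and P :: "real^'d^'m"
  assumes cp: "cluster_partition a n V K"
    and w: "\<forall>i<n. \<forall>j<n. w i j = w j i \<and> 0 \<le> w i j" and \<gamma>: "0 \<le> \<gamma>"
    and fusion: "cluster_fusion_condition (\<lambda>i. P *v a i) a n V K w \<gamma>"
    and sol: "proj_cc_solution P a n w \<gamma> x"
    and separated: "\<And>\<alpha> \<beta>. 1 \<le> \<alpha> \<Longrightarrow> \<alpha> < \<beta> \<Longrightarrow> \<beta> \<le> K \<Longrightarrow>
        \<gamma> * (wbar a n V K w \<alpha> + wbar a n V K w \<beta>) < norm (P *v cent a n V \<alpha> - P *v cent a n V \<beta>)"
  shows "perfectly_recovers a n V K x"
proof -
  interpret cluster_partition a n V K
    by (fact cp)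
  have near: "norm (x i - P *v cent a n V (label i)) \<le> \<gamma> * wbar a n V K w (label i)" if "i < n" for i
    using proj_cc_near_projected_centroid[OF cp w \<gamma> fusion sol] label[OF that] that
    by (simp add: Iset_eq_block)
  have "label i = label j" if "i < n" "j < n" "x i = x j" for i j
  proof (rule ccontr)
    assume "label i \<noteq> label j"
    then have "\<gamma> * (wbar a n V K w (label i) + wbar a n V K w (label j))
        < norm (P *v cent a n V (label i) - P *v cent a n V (label j))"
      using label that separated[of "label i" "label j"] separated[of "label j" "label i"]
      by (cases "label i < label j") (auto simp: norm_minus_commute add.commute)
    moreover have "P *v cent a n V (label i) - P *v cent a n V (label j)
        = (x j - P *v cent a n V (label j)) - (x i - P *v cent a n V (label i))"
      using that by simp
    then have "norm (P *v cent a n V (label i) - P *v cent a n V (label j))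
        \<le> norm (x j - P *v cent a n V (label j)) + norm (x i - P *v cent a n V (label i))"
      by (metis norm_triangle_ineq4)
    ultimately show False
      using near[OF that(1)] near[OF that(2)] by (simp add: distrib_left)
  qed
  then show ?thesis
    unfolding perfectly_recovers_def
    using proj_cc_constant_on_clusters[OF cp w \<gamma> fusion sol] same_cluster_iff by (meson iffI)
qed

lemma proj_cc_recovers_nontrivial_coarsening:
  fixes a :: "nat \<Rightarrow> real^'d" and P :: "real^'d^'m"
  assumes cp: "cluster_partition a n V K"
    and w: "\<forall>i<n. \<forall>j<n. w i j = w j i \<and> 0 \<le> w i j" and \<gamma>: "0 \<le> \<gamma>"
    and fusion: "cluster_fusion_condition (\<lambda>i. P *v a i) a n V K w \<gamma>"
    and sol: "proj_cc_solution P a n w \<gamma> x"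
    and \<alpha>: "\<alpha> \<in> {1..K}"
    and separated: "\<gamma> * wbar a n V K w \<alpha> < norm (P *v cent a n V 0 - P *v cent a n V \<alpha>)"
  shows "recovers_nontrivial_coarsening a n V K x"
proof -
  interpret cluster_partition a n V K
    by (fact cp)
  obtain i where i: "i < n" "label i = \<alpha>"
    using label_surj[OF \<alpha>] by blast
  have "\<exists>j<n. x j \<noteq> x i"
  proof (rule ccontr)
    assume "\<not> (\<exists>j<n. x j \<noteq> x i)"
    then have "x i = P *v cent a n V 0"
      using proj_cc_constant_eq_projected_mean[OF w \<gamma> sol i(1)] by blast
    moreover have "norm (x i - P *v cent a n V \<alpha>) \<le> \<gamma> * wbar a n V K w \<alpha>"
      using proj_cc_near_projected_centroid[OF cp w \<gamma> fusion sol \<alpha>] i by (simp add: Iset_eq_block[OF \<alpha>])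
    ultimately show False
      using separated by simp
  qed
  then obtain j where "j < n" "x i \<noteq> x j"
    by metis
  moreover have "x k = x l" if "k < n" "l < n" "label k = label l" for k l
    using proj_cc_constant_on_clusters[OF cp w \<gamma> fusion sol] same_cluster_iff that by blast
  ultimately show ?thesis
    unfolding recovers_nontrivial_coarsening_def
    using level_partition_is_coarsening card_level_partition_gt_1 i(1) by blast
qed

section \<open>Thresholds on gamma\<close>

lemma gamma_min_ge:
  assumes "\<alpha> \<in> {1..K}" "i \<in> Iset a n V \<alpha>" "j \<in> Iset a n V \<alpha>" "i \<noteq> j"
  shows "norm (a i - a j) / (real (nsz a n V \<alpha>) * w i j - mu a n V K w \<alpha> i j) \<le> gamma_min a n V K w"
proof -
  let ?f = "\<lambda>(\<alpha>, i, j). norm (a i - a j) / (real (nsz a n V \<alpha>) * w i j - mu a n V K w \<alpha> i j)"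
  have "{norm (a i - a j) / (real (nsz a n V \<alpha>) * w i j - mu a n V K w \<alpha> i j) | \<alpha> i j.
      \<alpha> \<in> {1..K} \<and> i \<in> Iset a n V \<alpha> \<and> j \<in> Iset a n V \<alpha> \<and> i \<noteq> j} \<subseteq> ?f ` ({1..K} \<times> {..<n} \<times> {..<n})"
  proof
    fix v assume "v \<in> {norm (a i - a j) / (real (nsz a n V \<alpha>) * w i j - mu a n V K w \<alpha> i j) | \<alpha> i j.
      \<alpha> \<in> {1..K} \<and> i \<in> Iset a n V \<alpha> \<and> j \<in> Iset a n V \<alpha> \<and> i \<noteq> j}"
    then obtain \<alpha> i j where "v = ?f (\<alpha>, i, j)" "\<alpha> \<in> {1..K}" "i \<in> Iset a n V \<alpha>" "j \<in> Iset a n V \<alpha>"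
      by auto
    then show "v \<in> ?f ` ({1..K} \<times> {..<n} \<times> {..<n})"
      by (intro image_eqI[of _ _ "(\<alpha>, i, j)"]) (auto simp: Iset_def)
  qed
  then have "finite {norm (a i - a j) / (real (nsz a n V \<alpha>) * w i j - mu a n V K w \<alpha> i j) | \<alpha> i j.
      \<alpha> \<in> {1..K} \<and> i \<in> Iset a n V \<alpha> \<and> j \<in> Iset a n V \<alpha> \<and> i \<noteq> j}"
    by (rule finite_subset) simp
  then show ?thesis
    unfolding gamma_min_def using assms by (intro Max_ge) auto
qed

lemma gamma_max_le:
  assumes "1 \<le> \<alpha>" "\<alpha> < \<beta>" "\<beta> \<le> K"
  shows "gamma_max a n V K w
    \<le> norm (cent a n V \<alpha> - cent a n V \<beta>) / (wbar a n V K w \<alpha> + wbar a n V K w \<beta>)"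
proof -
  let ?f = "\<lambda>(\<alpha>, \<beta>). norm (cent a n V \<alpha> - cent a n V \<beta>) / (wbar a n V K w \<alpha> + wbar a n V K w \<beta>)"
  have "{norm (cent a n V \<alpha> - cent a n V \<beta>) / (wbar a n V K w \<alpha> + wbar a n V K w \<beta>) | \<alpha> \<beta>.
      1 \<le> \<alpha> \<and> \<alpha> < \<beta> \<and> \<beta> \<le> K} \<subseteq> ?f ` ({..K} \<times> {..K})"
  proof
    fix v assume "v \<in> {norm (cent a n V \<alpha> - cent a n V \<beta>) / (wbar a n V K w \<alpha> + wbar a n V K w \<beta>) | \<alpha> \<beta>.
      1 \<le> \<alpha> \<and> \<alpha> < \<beta> \<and> \<beta> \<le> K}"
    then obtain \<alpha> \<beta> where "v = ?f (\<alpha>, \<beta>)" "\<alpha> < \<beta>" "\<beta> \<le> K"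
      by auto
    then show "v \<in> ?f ` ({..K} \<times> {..K})"
      by (intro image_eqI[of _ _ "(\<alpha>, \<beta>)"]) auto
  qed
  then have "finite {norm (cent a n V \<alpha> - cent a n V \<beta>) / (wbar a n V K w \<alpha> + wbar a n V K w \<beta>) | \<alpha> \<beta>.
      1 \<le> \<alpha> \<and> \<alpha> < \<beta> \<and> \<beta> \<le> K}"
    by (rule finite_subset) simp
  then show ?thesis
    unfolding gamma_max_def using assms by (intro Min_le) auto
qed

lemma gamma_max2_attained:
  assumes "1 \<le> K"
  obtains \<alpha> where "\<alpha> \<in> {1..K}"
    and "gamma_max2 a n V K w = norm (cent a n V 0 - cent a n V \<alpha>) / wbar a n V K w \<alpha>"
proof -
  have eq: "{norm (cent a n V 0 - cent a n V \<alpha>) / wbar a n V K w \<alpha> | \<alpha>. \<alpha> \<in> {1..K}}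
      = (\<lambda>\<alpha>. norm (cent a n V 0 - cent a n V \<alpha>) / wbar a n V K w \<alpha>) ` {1..K}"
    by auto
  have "gamma_max2 a n V K w \<in> (\<lambda>\<alpha>. norm (cent a n V 0 - cent a n V \<alpha>) / wbar a n V K w \<alpha>) ` {1..K}"
    unfolding gamma_max2_def eq using assms by (intro Max_in) auto
  then show ?thesis
    using that by blast
qed

lemma cluster_fusion_condition_of_gamma_min:
  fixes b :: "nat \<Rightarrow> 'b::real_normed_vector"
  assumes weight_cond: "\<forall>\<alpha>\<in>{1..K}. \<forall>i\<in>Iset a n V \<alpha>. \<forall>j\<in>Iset a n V \<alpha>. i \<noteq> j \<longrightarrow>
         0 < w i j \<and> mu a n V K w \<alpha> i j < real (nsz a n V \<alpha>) * w i j"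
    and s: "0 \<le> s" and lipschitz: "\<And>i j. i < n \<Longrightarrow> j < n \<Longrightarrow> norm (b i - b j) \<le> s * norm (a i - a j)"
    and \<gamma>: "s * gamma_min a n V K w \<le> \<gamma>"
  shows "cluster_fusion_condition b a n V K w \<gamma>"
  unfolding cluster_fusion_condition_def
proof (intro ballI impI)
  fix \<alpha> i j assume ij: "\<alpha> \<in> {1..K}" "i \<in> Iset a n V \<alpha>" "j \<in> Iset a n V \<alpha>" "i \<noteq> j"
  define den where "den = real (nsz a n V \<alpha>) * w i j - mu a n V K w \<alpha> i j"
  have "0 < den"
    using weight_cond ij by (simp add: den_def)
  then have "norm (a i - a j) \<le> gamma_min a n V K w * den"
    using gamma_min_ge[OF ij, of w] by (simp add: den_def pos_divide_le_eq)
  moreover have "norm (b i - b j) \<le> s * norm (a i - a j)"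
    using ij by (intro lipschitz) (auto simp: Iset_def)
  ultimately have "norm (b i - b j) \<le> (s * gamma_min a n V K w) * den"
    using s by (metis mult.assoc mult_left_mono order_trans)
  also have "\<dots> \<le> \<gamma> * den"
    using \<gamma> \<open>0 < den\<close> by (simp add: mult_right_mono)
  finally show "norm (b i - b j) \<le> \<gamma> * (real (nsz a n V \<alpha>) * w i j - mu a n V K w \<alpha> i j)"
    by (simp add: den_def)
qed

lemma gamma_min_nonneg:
  assumes cp: "cluster_partition a n V K"
    and weight_cond: "\<forall>\<alpha>\<in>{1..K}. \<forall>i\<in>Iset a n V \<alpha>. \<forall>j\<in>Iset a n V \<alpha>. i \<noteq> j \<longrightarrow>
         0 < w i j \<and> mu a n V K w \<alpha> i j < real (nsz a n V \<alpha>) * w i j"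
    and "K < n"
  shows "0 \<le> gamma_min a n V K w"
proof -
  interpret cluster_partition a n V K
    by (fact cp)
  have "label ` {..<n} \<subseteq> {1..K}"
    using label by blast
  then have "\<not> inj_on label {..<n}"
    using card_inj_on_le[of label "{..<n}" "{1..K}"] \<open>K < n\<close> by auto
  then obtain i j where ij: "i < n" "j < n" "i \<noteq> j" "label i = label j"
    unfolding inj_on_def by blast
  define \<alpha> where "\<alpha> = label i"
  have cl: "\<alpha> \<in> {1..K}" "i \<in> Iset a n V \<alpha>" "j \<in> Iset a n V \<alpha>"
    using label ij by (auto simp: \<alpha>_def Iset_eq_block)
  then have "mu a n V K w \<alpha> i j < real (nsz a n V \<alpha>) * w i j"
    using weight_cond ij(3) by blast
  then have "0 \<le> norm (a i - a j) / (real (nsz a n V \<alpha>) * w i j - mu a n V K w \<alpha> i j)"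
    by simp
  then show ?thesis
    using gamma_min_ge[OF cl ij(3), of w] by linarith
qed

lemma nonneg_of_gamma_min_le:
  assumes cp: "cluster_partition a n V K"
    and weight_cond: "\<forall>\<alpha>\<in>{1..K}. \<forall>i\<in>Iset a n V \<alpha>. \<forall>j\<in>Iset a n V \<alpha>. i \<noteq> j \<longrightarrow>
         0 < w i j \<and> mu a n V K w \<alpha> i j < real (nsz a n V \<alpha>) * w i j"
    and n: "K * (K + 1) < n" and \<epsilon>: "0 \<le> \<epsilon>" and \<gamma>: "sqrt (1 + \<epsilon>) * gamma_min a n V K w \<le> \<gamma>"
  shows "0 \<le> \<gamma>"
proof -
  have "K \<le> K * (K + 1)"
    by simp
  then have "0 \<le> gamma_min a n V K w"
    using gamma_min_nonneg[OF cp weight_cond] n by linarith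
  then have "0 \<le> sqrt (1 + \<epsilon>) * gamma_min a n V K w"
    using \<epsilon> by simp
  then show ?thesis
    using \<gamma> by linarith
qed

lemma wbar_nonneg:
  assumes "\<forall>i<n. \<forall>j<n. 0 \<le> w i j"
  shows "0 \<le> wbar a n V K w \<alpha>"
  using assms unfolding wbar_def wblock_def Iset_def by (intro mult_nonneg_nonneg sum_nonneg) auto

lemma mult_less_of_less_mult_divide:
  fixes \<gamma> s N W :: real
  assumes "0 \<le> \<gamma>" "0 \<le> s" "0 \<le> W" "\<gamma> < s * (N / W)"
  shows "\<gamma> * W < s * N"
proof (cases "W = 0")
  case False
  then show ?thesis
    using assms by (simp add: field_simps)
qed (use assms in simp)

section \<open>Random projections\<close>

definition eps_isometry_on :: "real \<Rightarrow> (real^'d) set \<Rightarrow> real^'d^'m \<Rightarrow> bool" where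
  "eps_isometry_on \<epsilon> U P \<longleftrightarrow>
     (\<forall>v\<in>U. sqrt (1 - \<epsilon>) * norm v \<le> norm (P *v v) \<and> norm (P *v v) \<le> sqrt (1 + \<epsilon>) * norm v)"

lemma norm_bounds_of_unit_distortion:
  fixes P :: "real^'d^'m"
  assumes distortion: "v \<noteq> 0 \<Longrightarrow> \<bar>(norm (P *v sgn v))\<^sup>2 - 1\<bar> \<le> \<epsilon>"
  shows "sqrt (1 - \<epsilon>) * norm v \<le> norm (P *v v) \<and> norm (P *v v) \<le> sqrt (1 + \<epsilon>) * norm v"
proof (cases "v = 0")
  case False
  have "v = norm v *\<^sub>R sgn v"
    using False by (simp add: sgn_div_norm)
  then have Pv: "norm (P *v v) = norm v * norm (P *v sgn v)"
    by (metis matrix_vector_mult_scaleR norm_scaleR abs_norm_cancel)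
  have unit: "\<bar>(norm (P *v sgn v))\<^sup>2 - 1\<bar> \<le> \<epsilon>"
    using distortion \<open>v \<noteq> 0\<close> by blast
  have "sqrt (1 - \<epsilon>) \<le> norm (P *v sgn v)"
    using real_sqrt_le_mono[of "1 - \<epsilon>" "(norm (P *v sgn v))\<^sup>2"] unit by simp
  moreover have "norm (P *v sgn v) \<le> sqrt (1 + \<epsilon>)"
    using real_sqrt_le_mono[of "(norm (P *v sgn v))\<^sup>2" "1 + \<epsilon>"] unit by simp
  ultimately show ?thesis
    unfolding Pv by (simp add: mult.commute mult_left_mono)
qed simp

lemma continuous_on_matrix_vector_mult_left: "continuous_on S (\<lambda>P::real^'d^'m. P *v z)"
  unfolding matrix_vector_mult_def by (intro continuous_intros)

lemma DJL_delta_pos: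
  fixes M :: "(real^'d^'m) measure"
  assumes "DJL M \<epsilon> \<delta>"
  shows "0 < \<delta>"
proof -
  obtain z :: "real^'d" where "z \<in> Basis"
    using nonempty_Basis by blast
  then have "measure M {P \<in> space M. \<bar>(norm (P *v z))\<^sup>2 - 1\<bar> > \<epsilon>} < \<delta>"
    using assms unfolding DJL_def by simp
  moreover have "0 \<le> measure M {P \<in> space M. \<bar>(norm (P *v z))\<^sup>2 - 1\<bar> > \<epsilon>}"
    by (rule measure_nonneg)
  ultimately show ?thesis
    by linarith
qed

lemma DJL_distortion_event_in_sets:
  fixes M :: "(real^'d^'m) measure"
  assumes "DJL M \<epsilon> \<delta>"
  shows "{P \<in> space M. \<epsilon> < \<bar>(norm (P *v z))\<^sup>2 - 1\<bar>} \<in> sets M"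
proof -
  have "sets M = sets borel"
    using assms by (simp add: DJL_def)
  moreover have "open {P::real^'d^'m. \<epsilon> < \<bar>(norm (P *v z))\<^sup>2 - 1\<bar>}"
    by (intro open_Collect_less continuous_intros continuous_on_matrix_vector_mult_left)
  ultimately show ?thesis
    using sets_eq_imp_space_eq[of M borel] by simp
qed

lemma DJL_eps_isometry_event:
  fixes M :: "(real^'d^'m) measure" and U :: "(real^'d) set"
  assumes djl: "DJL M \<epsilon> \<delta>" and U: "finite U"
  shows "\<exists>E\<in>sets M. 1 - real (card U) * \<delta> \<le> measure M E \<and> (\<forall>P\<in>E. eps_isometry_on \<epsilon> U P)"
proof -
  interpret prob_space M
    using djl by (simp add: DJL_def)
  \<comment> \<open>Zero vectors are preserved by every P, so they need no bad event.\<close>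
  define bad where "bad v = {P \<in> space M. v \<noteq> 0 \<and> \<epsilon> < \<bar>(norm (P *v sgn v))\<^sup>2 - 1\<bar>}" for v :: "real^'d"
  have bad_sets: "bad v \<in> sets M" for v
    using DJL_distortion_event_in_sets[OF djl, of "sgn v"] by (cases "v = 0") (simp_all add: bad_def)
  have bad_measure: "measure M (bad v) \<le> \<delta>" for v
  proof (cases "v = 0")
    case False
    then have "measure M (bad v) < \<delta>"
      using djl by (simp add: DJL_def bad_def norm_sgn)
    then show ?thesis
      by simp
  qed (use DJL_delta_pos[OF djl] in \<open>simp add: bad_def\<close>)
  define E where "E = space M - (\<Union>v\<in>U. bad v)"
  have "measure M (\<Union>v\<in>U. bad v) \<le> (\<Sum>v\<in>U. measure M (bad v))"
    using U bad_sets by (intro measure_UNION_le) auto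
  also have "\<dots> \<le> real (card U) * \<delta>"
    using sum_mono[of U "\<lambda>v. measure M (bad v)" "\<lambda>_. \<delta>"] bad_measure by simp
  finally have "1 - real (card U) * \<delta> \<le> measure M E"
    using U bad_sets by (simp add: E_def prob_compl sets.finite_UN)
  moreover have "E \<in> sets M"
    using U bad_sets by (auto simp: E_def)
  moreover have "eps_isometry_on \<epsilon> U P" if "P \<in> E" for P
    unfolding eps_isometry_on_def
  proof
    fix v assume "v \<in> U"
    then have "P \<in> space M" "P \<notin> bad v"
      using that by (simp_all add: E_def)
    then have "v \<noteq> 0 \<Longrightarrow> \<bar>(norm (P *v sgn v))\<^sup>2 - 1\<bar> \<le> \<epsilon>"
      by (simp add: bad_def not_less)
    then show "sqrt (1 - \<epsilon>) * norm v \<le> norm (P *v v) \<and> norm (P *v v) \<le> sqrt (1 + \<epsilon>) * norm v"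
      by (rule norm_bounds_of_unit_distortion)
  qed
  ultimately show ?thesis
    by blast
qed

text \<open>Only the differences f i - f j with j < i are listed: their negatives are controlled for free,
  which keeps the union bound below n^2/2 events.\<close>

definition pair_diffs :: "(nat \<Rightarrow> 'a::ab_group_add) \<Rightarrow> nat \<Rightarrow> 'a set" where
  "pair_diffs f m = (\<lambda>(i, j). f i - f j) ` (SIGMA i:{..<m}. {..<i})"

lemma card_pair_diffs_le: "2 * card (pair_diffs f m) \<le> m * (m - 1)"
proof -
  have "card (pair_diffs f m) \<le> card (SIGMA i:{..<m}. {..<i})"
    unfolding pair_diffs_def by (rule card_image_le) simp
  also have "\<dots> = \<Sum>{0..<m}"
    by (simp add: lessThan_atLeast0)
  also have "\<dots> = m * (m - 1) div 2"
    by (simp add: Sum_Ico_nat)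
  finally show ?thesis
    by linarith
qed

lemma eps_isometry_on_pair_diffs:
  fixes f :: "nat \<Rightarrow> real^'d" and P :: "real^'d^'m"
  assumes iso: "eps_isometry_on \<epsilon> (pair_diffs f m) P" and ij: "i < m" "j < m"
  shows "sqrt (1 - \<epsilon>) * norm (f i - f j) \<le> norm (P *v f i - P *v f j)"
    and "norm (P *v f i - P *v f j) \<le> sqrt (1 + \<epsilon>) * norm (f i - f j)"
proof -
  have lower: "sqrt (1 - \<epsilon>) * norm (f k - f l) \<le> norm (P *v f k - P *v f l)
      \<and> norm (P *v f k - P *v f l) \<le> sqrt (1 + \<epsilon>) * norm (f k - f l)" if "l < k" "k < m" for k l
    using iso that unfolding eps_isometry_on_def pair_diffs_def
    by (auto simp: matrix_vector_mult_diff_distrib)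
  consider "j < i" | "i = j" | "i < j"
    by linarith
  then have "sqrt (1 - \<epsilon>) * norm (f i - f j) \<le> norm (P *v f i - P *v f j)
      \<and> norm (P *v f i - P *v f j) \<le> sqrt (1 + \<epsilon>) * norm (f i - f j)"
  proof cases
    case 1
    then show ?thesis
      using lower ij by blast
  next
    case 3
    then show ?thesis
      using lower[OF 3 ij(2)] by (simp add: norm_minus_commute)
  qed simp
  then show "sqrt (1 - \<epsilon>) * norm (f i - f j) \<le> norm (P *v f i - P *v f j)"
    and "norm (P *v f i - P *v f j) \<le> sqrt (1 + \<epsilon>) * norm (f i - f j)"
    by auto
qed

lemma good_projection_event:
  fixes M :: "(real^'d^'m) measure" and a :: "nat \<Rightarrow> real^'d"
  assumes djl: "DJL M \<epsilon> (2 / real n powr p)" and n: "K * (K + 1) < n"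
  shows "\<exists>E\<in>sets M. 1 - real n powr (-(p - 2)) < measure M E
    \<and> (\<forall>P\<in>E. eps_isometry_on \<epsilon> (pair_diffs a n \<union> pair_diffs (cent a n V) (Suc K)) P)"
proof -
  define U where "U = pair_diffs a n \<union> pair_diffs (cent a n V) (Suc K)"
  have "finite U"
    by (simp add: U_def pair_diffs_def)
  then obtain E where E: "E \<in> sets M" "\<forall>P\<in>E. eps_isometry_on \<epsilon> U P"
    and measure_E: "1 - real (card U) * (2 / real n powr p) \<le> measure M E"
    using DJL_eps_isometry_event[OF djl] by blast
  have "real (card U) < real n ^ 2 / 2"
  proof -
    have "2 * card U \<le> n * (n - 1) + Suc K * K"
      using card_Un_le[of "pair_diffs a n" "pair_diffs (cent a n V) (Suc K)"]
        card_pair_diffs_le[of a n] card_pair_diffs_le[of "cent a n V" "Suc K"]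
      by (simp add: U_def)
    also have "\<dots> < n * (n - 1) + n"
      using n by (simp add: mult.commute)
    also have "\<dots> = n ^ 2"
      using n by (cases n) (simp_all add: power2_eq_square algebra_simps)
    finally have "real (2 * card U) < real (n ^ 2)"
      by (simp only: of_nat_less_iff)
    then show ?thesis
      by simp
  qed
  then have "real (card U) * (2 / real n powr p) < real n ^ 2 / 2 * (2 / real n powr p)"
    using DJL_delta_pos[OF djl] by (intro mult_strict_right_mono) simp_all
  moreover have "real n ^ 2 / 2 * (2 / real n powr p) = real n powr (-(p - 2))"
  proof -
    have "real n ^ 2 = real n powr 2"
      using n by (simp add: powr_numeral)
    then have "real n ^ 2 / 2 * (2 / real n powr p) = real n powr 2 / real n powr p"
      by simp
    also have "\<dots> = real n powr (2 - p)"
      by (simp add: powr_diff)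
    finally show ?thesis
      by simp
  qed
  ultimately have "1 - real n powr (-(p - 2)) < measure M E"
    using measure_E by linarith
  then show ?thesis
    using E unfolding U_def by blast
qed

section \<open>Recovery with high probability\<close>

lemma perfect_recovery_event:
  fixes a :: "nat \<Rightarrow> real^'d" and M :: "(real^'d^'m) measure"
  assumes cp: "cluster_partition a n V K"
    and w: "\<forall>i<n. \<forall>j<n. w i j = w j i \<and> 0 \<le> w i j"
    and weight_cond: "\<forall>\<alpha>\<in>{1..K}. \<forall>i\<in>Iset a n V \<alpha>. \<forall>j\<in>Iset a n V \<alpha>. i \<noteq> j \<longrightarrow>
         0 < w i j \<and> mu a n V K w \<alpha> i j < real (nsz a n V \<alpha>) * w i j"
    and n: "K * (K + 1) < n"
    and \<epsilon>: "0 \<le> \<epsilon>" "\<epsilon> \<le> 1" and djl: "DJL M \<epsilon> (2 / real n powr p)"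
    and \<gamma>: "sqrt (1 + \<epsilon>) * gamma_min a n V K w \<le> \<gamma>" "\<gamma> < sqrt (1 - \<epsilon>) * gamma_max a n V K w"
  shows "\<exists>E\<in>sets M. measure M E > 1 - real n powr (-(p - 2)) \<and>
    (\<forall>P\<in>E. \<forall>x. proj_cc_solution P a n w \<gamma> x \<longrightarrow> perfectly_recovers a n V K x)"
proof -
  obtain E where E: "E \<in> sets M" "1 - real n powr (-(p - 2)) < measure M E"
    and iso: "\<forall>P\<in>E. eps_isometry_on \<epsilon> (pair_diffs a n \<union> pair_diffs (cent a n V) (Suc K)) P"
    using good_projection_event[OF djl n, where a = a and V = V] by blast
  have \<gamma>0: "0 \<le> \<gamma>"
    by (rule nonneg_of_gamma_min_le[OF cp weight_cond n \<epsilon>(1) \<gamma>(1)])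
  have "perfectly_recovers a n V K x" if "P \<in> E" "proj_cc_solution P a n w \<gamma> x" for P x
  proof (rule proj_cc_perfectly_recovers[OF cp w \<gamma>0 _ that(2)])
    have points: "eps_isometry_on \<epsilon> (pair_diffs a n) P"
      and centroids: "eps_isometry_on \<epsilon> (pair_diffs (cent a n V) (Suc K)) P"
      using iso that(1) by (auto simp: eps_isometry_on_def)
    show "cluster_fusion_condition (\<lambda>i. P *v a i) a n V K w \<gamma>"
      by (rule cluster_fusion_condition_of_gamma_min[OF weight_cond _
          eps_isometry_on_pair_diffs(2)[OF points] \<gamma>(1)]) (use \<epsilon> in simp)
    show "\<gamma> * (wbar a n V K w \<alpha> + wbar a n V K w \<beta>) < norm (P *v cent a n V \<alpha> - P *v cent a n V \<beta>)"
      if "1 \<le> \<alpha>" "\<alpha> < \<beta>" "\<beta> \<le> K" for \<alpha> \<beta>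
    proof -
      have "sqrt (1 - \<epsilon>) * gamma_max a n V K w
          \<le> sqrt (1 - \<epsilon>) * (norm (cent a n V \<alpha> - cent a n V \<beta>) / (wbar a n V K w \<alpha> + wbar a n V K w \<beta>))"
        using gamma_max_le[OF that, of a n V w] \<epsilon>(2) by (intro mult_left_mono) auto
      then have "\<gamma> < sqrt (1 - \<epsilon>)
          * (norm (cent a n V \<alpha> - cent a n V \<beta>) / (wbar a n V K w \<alpha> + wbar a n V K w \<beta>))"
        using \<gamma>(2) by linarith
      then have "\<gamma> * (wbar a n V K w \<alpha> + wbar a n V K w \<beta>)
          < sqrt (1 - \<epsilon>) * norm (cent a n V \<alpha> - cent a n V \<beta>)"
        using \<gamma>0 \<epsilon>(2) w by (intro mult_less_of_less_mult_divide)
        (auto intro!: add_nonneg_nonneg wbar_nonneg)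
      also have "\<dots> \<le> norm (P *v cent a n V \<alpha> - P *v cent a n V \<beta>)"
        using eps_isometry_on_pair_diffs(1)[OF centroids] that by simp
      finally show ?thesis .
    qed
  qed
  then show ?thesis
    using E by blast
qed

lemma coarsening_recovery_event:
  fixes a :: "nat \<Rightarrow> real^'d" and M :: "(real^'d^'m) measure"
  assumes cp: "cluster_partition a n V K"
    and w: "\<forall>i<n. \<forall>j<n. w i j = w j i \<and> 0 \<le> w i j"
    and weight_cond: "\<forall>\<alpha>\<in>{1..K}. \<forall>i\<in>Iset a n V \<alpha>. \<forall>j\<in>Iset a n V \<alpha>. i \<noteq> j \<longrightarrow>
         0 < w i j \<and> mu a n V K w \<alpha> i j < real (nsz a n V \<alpha>) * w i j"
    and n: "K * (K + 1) < n"
    and \<epsilon>: "0 \<le> \<epsilon>" "\<epsilon> \<le> 1" and djl: "DJL M \<epsilon> (2 / real n powr p)"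
    and \<gamma>: "sqrt (1 + \<epsilon>) * gamma_min a n V K w \<le> \<gamma>" "\<gamma> < sqrt (1 - \<epsilon>) * gamma_max2 a n V K w"
  shows "\<exists>E\<in>sets M. measure M E > 1 - real n powr (-(p - 2)) \<and>
    (\<forall>P\<in>E. \<forall>x. proj_cc_solution P a n w \<gamma> x \<longrightarrow> recovers_nontrivial_coarsening a n V K x)"
proof -
  obtain E where E: "E \<in> sets M" "1 - real n powr (-(p - 2)) < measure M E"
    and iso: "\<forall>P\<in>E. eps_isometry_on \<epsilon> (pair_diffs a n \<union> pair_diffs (cent a n V) (Suc K)) P"
    using good_projection_event[OF djl n, where a = a and V = V] by blast
  have \<gamma>0: "0 \<le> \<gamma>"
    by (rule nonneg_of_gamma_min_le[OF cp weight_cond n \<epsilon>(1) \<gamma>(1)])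
  have "1 \<le> K"
    using cluster_partition.one_le_K[OF cp] n by simp
  then obtain \<alpha> where \<alpha>: "\<alpha> \<in> {1..K}"
    and gmax2: "gamma_max2 a n V K w = norm (cent a n V 0 - cent a n V \<alpha>) / wbar a n V K w \<alpha>"
    by (rule gamma_max2_attained)
  have "recovers_nontrivial_coarsening a n V K x" if "P \<in> E" "proj_cc_solution P a n w \<gamma> x" for P x
  proof (rule proj_cc_recovers_nontrivial_coarsening[OF cp w \<gamma>0 _ that(2) \<alpha>])
    have points: "eps_isometry_on \<epsilon> (pair_diffs a n) P"
      and centroids: "eps_isometry_on \<epsilon> (pair_diffs (cent a n V) (Suc K)) P"
      using iso that(1) by (auto simp: eps_isometry_on_def)
    show "cluster_fusion_condition (\<lambda>i. P *v a i) a n V K w \<gamma>"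
      by (rule cluster_fusion_condition_of_gamma_min[OF weight_cond _
          eps_isometry_on_pair_diffs(2)[OF points] \<gamma>(1)]) (use \<epsilon> in simp)
    have "\<gamma> * wbar a n V K w \<alpha> < sqrt (1 - \<epsilon>) * norm (cent a n V 0 - cent a n V \<alpha>)"
      using \<gamma>0 \<epsilon>(2) \<gamma>(2) w unfolding gmax2 by (intro mult_less_of_less_mult_divide)
      (auto intro!: wbar_nonneg)
    also have "\<dots> \<le> norm (P *v cent a n V 0 - P *v cent a n V \<alpha>)"
      using eps_isometry_on_pair_diffs(1)[OF centroids] \<alpha> by simp
    finally show "\<gamma> * wbar a n V K w \<alpha> < norm (P *v cent a n V 0 - P *v cent a n V \<alpha>)" .
  qed
  then show ?thesis
    using E by blast
qed

lemma less_sq_ratio_of_sqrt_ratio_less: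
  fixes e r :: real
  assumes "0 \<le> e" "e < 1" "sqrt ((1 + e) / (1 - e)) < r"
  shows "e < (r\<^sup>2 - 1) / (r\<^sup>2 + 1)"
proof -
  have q: "0 \<le> (1 + e) / (1 - e)"
    using assms by simp
  have "(sqrt ((1 + e) / (1 - e)))\<^sup>2 < r\<^sup>2"
    by (rule power_strict_mono) (use assms(3) q in auto)
  then have "(1 + e) / (1 - e) < r\<^sup>2"
    using q by simp
  then have "1 + e < r\<^sup>2 * (1 - e)"
    using assms(2) by (simp add: divide_less_eq)
  then show ?thesis
    by (simp add: less_divide_eq add_pos_nonneg algebra_simps)
qed

lemma sq_ratio_less_one: "((r::real)\<^sup>2 - 1) / (r\<^sup>2 + 1) < 1"
proof -
  have "0 < r\<^sup>2 + 1"
    using zero_le_power2[of r] by linarith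
  then show ?thesis
    by (simp add: divide_less_eq)
qed

theorem theorem10:
  fixes a :: "nat \<Rightarrow> real^'d" and n K :: nat and V :: "nat \<Rightarrow> (real^'d) set"
    and w :: "nat \<Rightarrow> nat \<Rightarrow> real" and p c :: real
  defines "gmin \<equiv> gamma_min a n V K w"
    and "gmax \<equiv> gamma_max a n V K w"
    and "gmax2 \<equiv> gamma_max2 a n V K w"
    and "eps_min \<equiv> sqrt (c * p * ln (real n) / real CARD('d))"
  defines "r \<equiv> gmax / gmin" and "r2 \<equiv> gmax2 / gmin"
  defines "eps_sup \<equiv> (r\<^sup>2 - 1) / (r\<^sup>2 + 1)" and "eps_sup2 \<equiv> (r2\<^sup>2 - 1) / (r2\<^sup>2 + 1)"
  assumes points_distinct: "inj_on a {..<n}"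
    and hidden_partition: "partition_on (a ` {..<n}) (V ` {1..K})" "inj_on V {1..K}"
    and weights: "\<forall>i<n. \<forall>j<n. w i j = w j i \<and> 0 \<le> w i j"
    and distinct_centroids: "\<forall>\<alpha>\<le>K. \<forall>\<beta>\<le>K. \<alpha> \<noteq> \<beta> \<longrightarrow> cent a n V \<alpha> \<noteq> cent a n V \<beta>"
    and weight_cond: "\<forall>\<alpha>\<in>{1..K}. \<forall>i\<in>Iset a n V \<alpha>. \<forall>j\<in>Iset a n V \<alpha>. i \<noteq> j \<longrightarrow>
         0 < w i j \<and> mu a n V K w \<alpha> i j < real (nsz a n V \<alpha>) * w i j"
    and n_large: "n > K * (K + 1)"
    and p_gt: "p > 2" and c_pos: "c > 0"
    and eps_min_lt1: "eps_min < 1"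
  shows "(r > sqrt ((1 + eps_min) / (1 - eps_min)) \<longrightarrow>
      eps_min < eps_sup \<and>
      (\<forall>\<epsilon> \<gamma>h (M :: (real^'d^'m) measure).
         eps_min \<le> \<epsilon> \<and> \<epsilon> < eps_sup \<and>
         CARD('m) = nat \<lceil>c * p * ln (real n) / \<epsilon>\<^sup>2\<rceil> \<and>
         DJL M \<epsilon> (2 / real n powr p) \<and>
         sqrt (1 + \<epsilon>) * gmin \<le> \<gamma>h \<and> \<gamma>h < sqrt (1 - \<epsilon>) * gmax \<longrightarrow>
         (\<exists>E\<in>sets M. measure M E > 1 - real n powr (-(p - 2)) \<and>
            (\<forall>P\<in>E. \<forall>x. proj_cc_solution P a n w \<gamma>h x \<longrightarrow> perfectly_recovers a n V K x)))) \<and>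
    (r2 > sqrt ((1 + eps_min) / (1 - eps_min)) \<longrightarrow>
      eps_min < eps_sup2 \<and>
      (\<forall>\<epsilon> \<gamma>h (M :: (real^'d^'m) measure).
         eps_min \<le> \<epsilon> \<and> \<epsilon> < eps_sup2 \<and>
         CARD('m) = nat \<lceil>c * p * ln (real n) / \<epsilon>\<^sup>2\<rceil> \<and>
         DJL M \<epsilon> (2 / real n powr p) \<and>
         sqrt (1 + \<epsilon>) * gmin \<le> \<gamma>h \<and> \<gamma>h < sqrt (1 - \<epsilon>) * gmax2 \<longrightarrow>
         (\<exists>E\<in>sets M. measure M E > 1 - real n powr (-(p - 2)) \<and>
            (\<forall>P\<in>E. \<forall>x. proj_cc_solution P a n w \<gamma>h x \<longrightarrow> recovers_nontrivial_coarsening a n V K x))))"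
proof -
  have cp: "cluster_partition a n V K"
    using hidden_partition by (rule cluster_partition.intro)
  have "1 \<le> real n"
    using n_large by simp
  then have eps_min0: "0 \<le> eps_min"
    using c_pos p_gt by (simp add: eps_min_def)
  have part1: "\<exists>E\<in>sets M. measure M E > 1 - real n powr (-(p - 2)) \<and>
      (\<forall>P\<in>E. \<forall>x. proj_cc_solution P a n w \<gamma>h x \<longrightarrow> perfectly_recovers a n V K x)"
    if "eps_min \<le> \<epsilon>" "\<epsilon> < eps_sup" "DJL M \<epsilon> (2 / real n powr p)"
      "sqrt (1 + \<epsilon>) * gmin \<le> \<gamma>h" "\<gamma>h < sqrt (1 - \<epsilon>) * gmax" for \<epsilon> \<gamma>h and M :: "(real^'d^'m) measure"
  proof (rule perfect_recovery_event[OF cp weights weight_cond n_large _ _ that(3)])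
    show "0 \<le> \<epsilon>" "\<epsilon> \<le> 1"
      using that(1,2) eps_min0 sq_ratio_less_one[of r] by (simp_all add: eps_sup_def)
  qed (use that in \<open>simp_all add: gmin_def gmax_def\<close>)
  have part2: "\<exists>E\<in>sets M. measure M E > 1 - real n powr (-(p - 2)) \<and>
      (\<forall>P\<in>E. \<forall>x. proj_cc_solution P a n w \<gamma>h x \<longrightarrow> recovers_nontrivial_coarsening a n V K x)"
    if "eps_min \<le> \<epsilon>" "\<epsilon> < eps_sup2" "DJL M \<epsilon> (2 / real n powr p)"
      "sqrt (1 + \<epsilon>) * gmin \<le> \<gamma>h" "\<gamma>h < sqrt (1 - \<epsilon>) * gmax2" for \<epsilon> \<gamma>h and M :: "(real^'d^'m) measure"
  proof (rule coarsening_recovery_event[OF cp weights weight_cond n_large _ _ that(3)])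
    show "0 \<le> \<epsilon>" "\<epsilon> \<le> 1"
      using that(1,2) eps_min0 sq_ratio_less_one[of r2] by (simp_all add: eps_sup2_def)
  qed (use that in \<open>simp_all add: gmin_def gmax2_def\<close>)
  show ?thesis
    using less_sq_ratio_of_sqrt_ratio_less[OF eps_min0 eps_min_lt1] part1 part2
    by (auto simp: eps_sup_def eps_sup2_def)
qed

end
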